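(* Let $\mathfrak{X}=(X,\{R_r\}_{r=0}^d)$ be a $P$-polynomial association scheme with base vertex $u_0$ and Terwilliger algebra $T=T(u_0)$. Let $e,r_1,\dots,r_p$ be integers with $p-1\le e\le r_1<r_2<\cdots<r_p\le d$. Suppose that every irreducible $T$-module $W$ with endpoint $\rho(W)\le e$ is thin and satisfies $\rho(W)+\delta(W)\ge r_p$. If the $p\times p$ matrix whose $(i,h)$ entry ($i=1,\dots,p$, $h=0,1,\dots,p-1$) is \[ \prod_{s=1}^{h} c_{r_i-e+p-s}\qquad(\text{the empty product for } h=0 \text{ being } 1), \] i.e. whose $i$-th row is $\big(1,\ c_{r_i-e+p-1},\ c_{r_i-e+p-1}c_{r_i-e+p-2},\ \dots,\ c_{r_i-e+p-1}\cdots c_{r_i-e+1}\big)$, is nonsingular, then, with $S=X_{r_1}\cup X_{r_2}\cup\cdots\cup X_{r_p}$, \[ \dim\big(\mathrm{Hom}_0(S)+\mathrm{Hom}_1(S)+\cdots+\mathrm{Hom}_e(S)\big)=k_e+k_{e-1}+\cdots+k_{e-p+1}. \]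
   Context: $\mathfrak{X}$ is a symmetric $d$-class association scheme on the finite set $X$ which is $P$-polynomial with respect to the ordering $R_0,\dots,R_d$: $(X,R_1)$ is a distance-regular graph and $R_i$ is its distance-$i$ relation. $A_i$ is the adjacency matrix of $R_i$, $E_0,\dots,E_d$ the primitive idempotents of the Bose–Mesner algebra. Intersection numbers: $c_i=p^i_{1,i-1}$ ($i=1,\dots,d$). Shells: $X_r=\{x : (u_0,x)\in R_r\}$, $k_r=|X_r|$. For $z\in X_j$, $f_z\in\mathcal{F}(X)$ (real functions on $X$) is defined by $f_z(x)=1$ if $x\in X_i$ with $i\ge j$ and $(x,z)\in R_{i-j}$, and $0$ otherwise; $\mathrm{Hom}_j(X)=\mathrm{span}\{f_z: z\in X_j\}$, and for $S\subseteq X$, $\mathrm{Hom}_j(S)=\{f|_S : f\in\mathrm{Hom}_j(X)\}$ (a space of functions on $S$). Terwilliger algebra: $E_i^*$ is the diagonal matrix with $(E_i^* )_{xx}=(A_i)_{u_0x}$; $T$ is the matrix algebra generated by $A_0,\dots,A_d,E_0^*,\dots,E_d^*$, acting on $\mathbb{C}^X$. A $T$-module is a $T$-invariant subspace of $\mathbb{C}^X$; for an irreducible $T$-module $W$, its endpoint is $\rho(W)=\min\{i: E_i^*W\ne0\}$, its diameter is $\delta(W)=|\{i: E_i^*W\neq 0\}|-1$, and $W$ is thin if $\dim E_i^*W\le 1$ for all $i$. *)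

theory Defs
  imports Complex_Main "HOL-Library.Function_Algebras" "Jordan_Normal_Form.Determinant"
begin

(* The finite set X is the universe of a finite type 'a. Relations R 0, ..., R d
   (values R i for i > d are irrelevant and never used). *)

definition symmetric_assoc_scheme :: "nat \<Rightarrow> (nat \<Rightarrow> ('a::finite \<times> 'a) set) \<Rightarrow> bool" where
  "symmetric_assoc_scheme d R \<longleftrightarrow>
     R 0 = Id \<and>
     (\<forall>i\<le>d. R i \<noteq> {}) \<and>
     (\<forall>x y. \<exists>!i. i \<le> d \<and> (x, y) \<in> R i) \<and>
     (\<forall>i\<le>d. \<forall>x y. (x, y) \<in> R i \<longrightarrow> (y, x) \<in> R i) \<and>
     (\<forall>h\<le>d. \<forall>i\<le>d. \<forall>j\<le>d. \<exists>n::nat. \<forall>x y. (x, y) \<in> R h \<longrightarrow>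
         card {z. (x, z) \<in> R i \<and> (z, y) \<in> R j} = n)"

definition graph_dist_is :: "('a \<times> 'a) set \<Rightarrow> nat \<Rightarrow> 'a \<Rightarrow> 'a \<Rightarrow> bool" where
  "graph_dist_is E i x y \<longleftrightarrow> (x, y) \<in> E ^^ i \<and> (\<forall>j<i. (x, y) \<notin> E ^^ j)"

definition P_polynomial_scheme :: "nat \<Rightarrow> (nat \<Rightarrow> ('a::finite \<times> 'a) set) \<Rightarrow> bool" where
  "P_polynomial_scheme d R \<longleftrightarrow> symmetric_assoc_scheme d R \<and>
     (\<forall>i\<le>d. \<forall>x y. (x, y) \<in> R i \<longleftrightarrow> graph_dist_is (R 1) i x y)"

definition int_num :: "(nat \<Rightarrow> ('a::finite \<times> 'a) set) \<Rightarrow> nat \<Rightarrow> nat \<Rightarrow> nat \<Rightarrow> nat" where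
  "int_num R h i j = (let (x, y) = (SOME p. p \<in> R h) in card {z. (x, z) \<in> R i \<and> (z, y) \<in> R j})"

definition c_num :: "(nat \<Rightarrow> ('a::finite \<times> 'a) set) \<Rightarrow> nat \<Rightarrow> nat" where
  "c_num R i = int_num R i 1 (i - 1)"

definition shell :: "(nat \<Rightarrow> ('a \<times> 'a) set) \<Rightarrow> 'a \<Rightarrow> nat \<Rightarrow> 'a set" where
  "shell R u0 r = {x. (u0, x) \<in> R r}"

definition kval :: "(nat \<Rightarrow> ('a \<times> 'a) set) \<Rightarrow> 'a \<Rightarrow> nat \<Rightarrow> nat" where
  "kval R u0 r = card (shell R u0 r)"

definition fscale :: "'k::times \<Rightarrow> ('a \<Rightarrow> 'k) \<Rightarrow> ('a \<Rightarrow> 'k)" where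
  "fscale c f = (\<lambda>x. c * f x)"

definition fz :: "nat \<Rightarrow> (nat \<Rightarrow> ('a \<times> 'a) set) \<Rightarrow> 'a \<Rightarrow> nat \<Rightarrow> 'a \<Rightarrow> 'a \<Rightarrow> real" where
  "fz d R u0 j z = (\<lambda>x. if \<exists>i. j \<le> i \<and> i \<le> d \<and> (u0, x) \<in> R i \<and> (x, z) \<in> R (i - j) then 1 else 0)"

definition HomX :: "nat \<Rightarrow> (nat \<Rightarrow> ('a \<times> 'a) set) \<Rightarrow> 'a \<Rightarrow> nat \<Rightarrow> ('a \<Rightarrow> real) set" where
  "HomX d R u0 j = module.span (fscale :: real \<Rightarrow> _) (fz d R u0 j ` shell R u0 j)"

(* functions on S, represented as functions on X vanishing outside S *)
definition restr :: "'a set \<Rightarrow> ('a \<Rightarrow> real) \<Rightarrow> ('a \<Rightarrow> real)" where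
  "restr S f = (\<lambda>x. if x \<in> S then f x else 0)"

definition HomS :: "nat \<Rightarrow> (nat \<Rightarrow> ('a \<times> 'a) set) \<Rightarrow> 'a \<Rightarrow> nat \<Rightarrow> 'a set \<Rightarrow> ('a \<Rightarrow> real) set" where
  "HomS d R u0 j S = restr S ` HomX d R u0 j"

type_synonym 'a cmat = "'a \<Rightarrow> 'a \<Rightarrow> complex"

definition adj_mat :: "(nat \<Rightarrow> ('a \<times> 'a) set) \<Rightarrow> nat \<Rightarrow> 'a cmat" where
  "adj_mat R i = (\<lambda>x y. if (x, y) \<in> R i then 1 else 0)"

definition dual_idem :: "(nat \<Rightarrow> ('a \<times> 'a) set) \<Rightarrow> 'a \<Rightarrow> nat \<Rightarrow> 'a cmat" where
  "dual_idem R u0 i = (\<lambda>x y. if x = y \<and> (u0, x) \<in> R i then 1 else 0)"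

definition cmat_mult :: "('a::finite) cmat \<Rightarrow> 'a cmat \<Rightarrow> 'a cmat" where
  "cmat_mult M N = (\<lambda>x y. \<Sum>z\<in>UNIV. M x z * N z y)"

definition cmat_apply :: "('a::finite) cmat \<Rightarrow> ('a \<Rightarrow> complex) \<Rightarrow> ('a \<Rightarrow> complex)" where
  "cmat_apply M v = (\<lambda>x. \<Sum>y\<in>UNIV. M x y * v y)"

inductive_set terwilliger_alg :: "nat \<Rightarrow> (nat \<Rightarrow> ('a::finite \<times> 'a) set) \<Rightarrow> 'a \<Rightarrow> 'a cmat set"
  for d R u0 where
  gen_A: "i \<le> d \<Longrightarrow> adj_mat R i \<in> terwilliger_alg d R u0"
| gen_E: "i \<le> d \<Longrightarrow> dual_idem R u0 i \<in> terwilliger_alg d R u0"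
| add: "M \<in> terwilliger_alg d R u0 \<Longrightarrow> N \<in> terwilliger_alg d R u0 \<Longrightarrow> (\<lambda>x y. M x y + N x y) \<in> terwilliger_alg d R u0"
| mult: "M \<in> terwilliger_alg d R u0 \<Longrightarrow> N \<in> terwilliger_alg d R u0 \<Longrightarrow> cmat_mult M N \<in> terwilliger_alg d R u0"
| smult: "M \<in> terwilliger_alg d R u0 \<Longrightarrow> (\<lambda>x y. c * M x y) \<in> terwilliger_alg d R u0"

definition T_module :: "nat \<Rightarrow> (nat \<Rightarrow> ('a::finite \<times> 'a) set) \<Rightarrow> 'a \<Rightarrow> ('a \<Rightarrow> complex) set \<Rightarrow> bool" where
  "T_module d R u0 W \<longleftrightarrow> module.subspace (fscale :: complex \<Rightarrow> _) W \<and>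
     (\<forall>M\<in>terwilliger_alg d R u0. \<forall>v\<in>W. cmat_apply M v \<in> W)"

definition irreducible_T_module :: "nat \<Rightarrow> (nat \<Rightarrow> ('a::finite \<times> 'a) set) \<Rightarrow> 'a \<Rightarrow> ('a \<Rightarrow> complex) set \<Rightarrow> bool" where
  "irreducible_T_module d R u0 W \<longleftrightarrow> T_module d R u0 W \<and> W \<noteq> {0} \<and>
     (\<forall>W'. T_module d R u0 W' \<and> W' \<subseteq> W \<longrightarrow> W' = {0} \<or> W' = W)"

definition Estar_img :: "(nat \<Rightarrow> ('a::finite \<times> 'a) set) \<Rightarrow> 'a \<Rightarrow> nat \<Rightarrow> ('a \<Rightarrow> complex) set \<Rightarrow> ('a \<Rightarrow> complex) set" where
  "Estar_img R u0 i W = cmat_apply (dual_idem R u0 i) ` W"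

definition endpoint :: "nat \<Rightarrow> (nat \<Rightarrow> ('a::finite \<times> 'a) set) \<Rightarrow> 'a \<Rightarrow> ('a \<Rightarrow> complex) set \<Rightarrow> nat" where
  "endpoint d R u0 W = (LEAST i. i \<le> d \<and> Estar_img R u0 i W \<noteq> {0})"

definition module_diameter :: "nat \<Rightarrow> (nat \<Rightarrow> ('a::finite \<times> 'a) set) \<Rightarrow> 'a \<Rightarrow> ('a \<Rightarrow> complex) set \<Rightarrow> nat" where
  "module_diameter d R u0 W = card {i. i \<le> d \<and> Estar_img R u0 i W \<noteq> {0}} - 1"

definition thin_module :: "nat \<Rightarrow> (nat \<Rightarrow> ('a::finite \<times> 'a) set) \<Rightarrow> 'a \<Rightarrow> ('a \<Rightarrow> complex) set \<Rightarrow> bool" where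
  "thin_module d R u0 W \<longleftrightarrow>
     (\<forall>i\<le>d. vector_space.dim (fscale :: complex \<Rightarrow> _) (Estar_img R u0 i W) \<le> 1)"

(* the p x p matrix with (i,h) entry prod_{s=1}^h c_{r_i - e + p - s}; rows i = 1..p stored at index i-1 *)
definition c_matrix :: "(nat \<Rightarrow> ('a::finite \<times> 'a) set) \<Rightarrow> nat \<Rightarrow> nat \<Rightarrow> (nat \<Rightarrow> nat) \<Rightarrow> real mat" where
  "c_matrix R p e r = mat p p (\<lambda>(i, h). \<Prod>s = 1..h. real (c_num R (r (i + 1) - e + p - s)))"

end

theory Submission
  imports Defs
begin

text \<open>Let \<open>\<Psi> = \<Sum>\<^sub>t \<Sum>\<^sub>j\<^sub>\<le>\<^sub>e E\<^sup>*\<^sub>r\<^sub>t A\<^sub>r\<^sub>t\<^sub>-\<^sub>j E\<^sup>*\<^sub>j\<close> on \<open>\<complex>\<^sup>X\<close>.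
  It maps the unit vector of a vertex \<open>z \<in> X\<^sub>j\<close>, \<open>j \<le> e\<close>, to \<open>f\<^sub>z\<close> restricted to
  \<open>S\<close> and kills the other unit vectors, so the dimension in question is \<open>dim \<Psi>(\<complex>\<^sup>X)\<close>.
  Since \<open>\<Psi> \<in> T\<close> and \<open>T\<close> is closed under adjoints, \<open>\<complex>\<^sup>X\<close> splits orthogonally into
  irreducible \<open>T\<close>-modules, each preserved by \<open>\<Psi>\<close> and by the \<open>E\<^sup>*\<^sub>j\<close>; it therefore
  suffices to show \<open>dim \<Psi>(W) = \<Sum>\<^sub>j\<^sub>=\<^sub>e\<^sub>-\<^sub>p\<^sub>+\<^sub>1\<^sup>e dim E\<^sup>*\<^sub>j W\<close> for irreducible \<open>W\<close>,
  because the right-hand sides add up to \<open>k\<^sub>e\<^sub>-\<^sub>p\<^sub>+\<^sub>1 + \<dots> + k\<^sub>e\<close>.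
  If \<open>\<rho>(W) > e\<close> both sides vanish. Otherwise \<open>W\<close> is thin with basis
  \<open>v\<^sub>0, \<dots>, v\<^sub>\<delta>\<close>, \<open>v\<^sub>k\<^sub>+\<^sub>1 = E\<^sup>*\<^sub>\<rho>\<^sub>+\<^sub>k\<^sub>+\<^sub>1 A\<^sub>1 v\<^sub>k\<close>, and the intersection
  numbers give \<open>E\<^sup>*\<^sub>r A\<^sub>r\<^sub>-\<^sub>j v\<^sub>j\<^sub>-\<^sub>\<rho> = v\<^sub>r\<^sub>-\<^sub>\<rho> / (c\<^sub>1 \<cdots> c\<^sub>r\<^sub>-\<^sub>j)\<close>; hence
  \<open>\<Psi> v\<^sub>j\<^sub>-\<^sub>\<rho> = \<Sum>\<^sub>t v\<^sub>r\<^sub>t\<^sub>-\<^sub>\<rho> / (c\<^sub>1 \<cdots> c\<^sub>r\<^sub>t\<^sub>-\<^sub>j)\<close>. Nonsingularity of the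
  matrix of the \<open>c\<^sub>i\<close> is exactly linear independence of these vectors for
  \<open>max(\<rho>, e-p+1) \<le> j \<le> e\<close>, and they span \<open>\<Psi>(W)\<close>; their number is the right-hand side.\<close>

section \<open>Functions on a finite set\<close>

interpretation fun_space: vector_space "fscale :: 'k::field \<Rightarrow> ('b \<Rightarrow> 'k) \<Rightarrow> ('b \<Rightarrow> 'k)"
  by unfold_locales (auto simp: fscale_def algebra_simps fun_eq_iff)

lemma fscale_apply: "fscale c f x = c * f x"
  by (simp add: fscale_def)

lemma sum_fun_apply: "(\<Sum>i\<in>A. f i) x = (\<Sum>i\<in>A. f i x)"
  by (induction A rule: infinite_finite_induct) auto

definition unit_fun :: "'b \<Rightarrow> 'b \<Rightarrow> 'k::field" where
  "unit_fun a = (\<lambda>x. if x = a then 1 else 0)"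

lemma fun_eq_sum_unit_fun: "(f :: 'b::finite \<Rightarrow> 'k::field) = (\<Sum>a\<in>UNIV. fscale (f a) (unit_fun a))"
proof (rule ext)
  fix x
  have "(\<Sum>a\<in>UNIV. f a * (if x = a then 1 else 0)) = (\<Sum>a\<in>UNIV. if a = x then f a else 0)"
    by (rule sum.cong) auto
  then show "f x = (\<Sum>a\<in>UNIV. fscale (f a) (unit_fun a)) x"
    by (simp add: sum_fun_apply unit_fun_def fscale_apply)
qed

lemma inj_unit_fun: "inj (unit_fun :: 'b \<Rightarrow> 'b \<Rightarrow> 'k::field)"
  by (rule injI) (metis unit_fun_def one_neq_zero)

lemma independent_unit_funs: "fun_space.independent (range (unit_fun :: 'b \<Rightarrow> 'b \<Rightarrow> 'k::field))"
  unfolding fun_space.dependent_def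
proof clarsimp
  fix a :: 'b
  assume a: "(unit_fun a :: 'b \<Rightarrow> 'k) \<in> fun_space.span (range unit_fun - {unit_fun a})"
  have "fun_space.span (range unit_fun - {unit_fun a}) \<subseteq> {f :: 'b \<Rightarrow> 'k. f a = 0}"
    by (rule fun_space.span_minimal)
       (auto simp: unit_fun_def fun_space.subspace_def fscale_apply)
  with a show False by (auto simp: unit_fun_def)
qed

lemma span_unit_funs: "fun_space.span (range (unit_fun :: 'b::finite \<Rightarrow> 'b \<Rightarrow> 'k::field)) = UNIV"
proof -
  have "f \<in> fun_space.span (range unit_fun)" for f :: "'b \<Rightarrow> 'k"
    by (subst fun_eq_sum_unit_fun)
       (intro fun_space.span_sum fun_space.span_scale fun_space.span_base, auto)
  then show ?thesis by auto
qed

interpretation fin_fun_space: finite_dimensional_vector_space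
  "fscale :: 'k::field \<Rightarrow> ('b::finite \<Rightarrow> 'k) \<Rightarrow> ('b \<Rightarrow> 'k)" "range unit_fun"
  by unfold_locales (auto simp: independent_unit_funs span_unit_funs)

lemma dim_vanishing_outside:
  "fun_space.dim {f :: 'b::finite \<Rightarrow> 'k::field. \<forall>x. x \<notin> A \<longrightarrow> f x = 0} = card A"
proof -
  have "fun_space.dim {f :: 'b \<Rightarrow> 'k. \<forall>x. x \<notin> A \<longrightarrow> f x = 0} = card (unit_fun ` A :: ('b \<Rightarrow> 'k) set)"
  proof (rule fun_space.dim_unique)
    show "unit_fun ` A \<subseteq> {f :: 'b \<Rightarrow> 'k. \<forall>x. x \<notin> A \<longrightarrow> f x = 0}"
      by (auto simp: unit_fun_def)
    show "fun_space.independent (unit_fun ` A :: ('b \<Rightarrow> 'k) set)"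
      by (rule fun_space.independent_mono[OF independent_unit_funs]) auto
    show "{f :: 'b \<Rightarrow> 'k. \<forall>x. x \<notin> A \<longrightarrow> f x = 0} \<subseteq> fun_space.span (unit_fun ` A)"
    proof
      fix f :: "'b \<Rightarrow> 'k" assume "f \<in> {f. \<forall>x. x \<notin> A \<longrightarrow> f x = 0}"
      then have f0: "\<And>x. x \<notin> A \<Longrightarrow> f x = 0" by auto
      have "f = (\<Sum>a\<in>UNIV. fscale (f a) (unit_fun a))" by (rule fun_eq_sum_unit_fun)
      also have "\<dots> = (\<Sum>a\<in>A. fscale (f a) (unit_fun a))"
        by (rule sum.mono_neutral_right) (auto simp: f0 fscale_def fun_eq_iff)
      also have "\<dots> \<in> fun_space.span (unit_fun ` A)"
        by (intro fun_space.span_sum fun_space.span_scale fun_space.span_base) auto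
      finally show "f \<in> fun_space.span (unit_fun ` A)" .
    qed
  qed simp
  also have "\<dots> = card A"
    by (rule card_image) (rule inj_on_subset[OF inj_unit_fun], auto)
  finally show ?thesis .
qed

lemma dim_UNIV_fun: "fun_space.dim (UNIV :: ('b::finite \<Rightarrow> 'k::field) set) = card (UNIV :: 'b set)"
  using dim_vanishing_outside[where A = "UNIV :: 'b set", where 'k = 'k] by simp

lemma independent_family_image:
  fixes f :: "nat \<Rightarrow> ('b::finite \<Rightarrow> 'k::field)"
  assumes fin: "finite I"
    and indep: "\<And>c. (\<Sum>j\<in>I. fscale (c j) (f j)) = 0 \<Longrightarrow> \<forall>j\<in>I. c j = 0"
  shows "fun_space.independent (f ` I) \<and> card (f ` I) = card I"
proof
  have inj: "inj_on f I"
  proof (rule inj_onI, rule ccontr)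
    fix i j assume ij: "i \<in> I" "j \<in> I" "f i = f j" "i \<noteq> j"
    define c where "c k = (if k = i then 1 else if k = j then -1 else (0::'k))" for k
    have "(\<Sum>k\<in>I. fscale (c k) (f k)) = (\<Sum>k\<in>{i,j}. fscale (c k) (f k))"
      by (rule sum.mono_neutral_right) (use fin ij in \<open>auto simp: c_def fscale_def fun_eq_iff\<close>)
    also have "\<dots> = 0" using ij by (simp add: c_def fscale_def fun_eq_iff)
    finally have "\<forall>k\<in>I. c k = 0" by (rule indep)
    then show False using ij by (auto simp: c_def)
  qed
  then show "card (f ` I) = card I" by (rule card_image)
  show "fun_space.independent (f ` I)"
    unfolding fin_fun_space.independent_explicit
  proof (intro conjI allI impI ballI)
    show "finite (f ` I)" using fin by simp
    fix c v assume h: "(\<Sum>v\<in>f ` I. fscale (c v) v) = 0" and v: "v \<in> f ` I"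
    have "(\<Sum>j\<in>I. fscale ((c \<circ> f) j) (f j)) = 0"
      using h by (simp add: sum.reindex[OF inj])
    then have "\<forall>j\<in>I. (c \<circ> f) j = 0" by (rule indep)
    then show "c v = 0" using v by auto
  qed
qed

lemma multiple_of_nonzero_in_dim_le_1:
  fixes S :: "('b::finite \<Rightarrow> 'k::field) set"
  assumes S: "fun_space.subspace S" and dim: "fun_space.dim S \<le> 1"
    and u: "u \<in> S" "u \<noteq> 0" and s: "s \<in> S"
  shows "\<exists>a. s = fscale a u"
proof -
  have "S \<subseteq> fun_space.span {u}"
    by (rule fin_fun_space.card_ge_dim_independent) (use u dim in auto)
  then show ?thesis using s by (auto simp: fun_space.span_singleton)
qed

lemma dim_image_direct_sum:
  fixes L :: "('b::finite \<Rightarrow> 'k::field) \<Rightarrow> ('b \<Rightarrow> 'k)"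
  assumes L: "module_hom fscale fscale L"
    and W: "fun_space.subspace W" and V: "fun_space.subspace V" and disj: "W \<inter> V \<subseteq> {0}"
    and LW: "L ` W \<subseteq> W" and LV: "L ` V \<subseteq> V"
  shows "fun_space.dim (L ` {x + y |x y. x \<in> W \<and> y \<in> V}) = fun_space.dim (L ` W) + fun_space.dim (L ` V)"
proof -
  have add: "L (x + y) = L x + L y" for x y using L by (rule module_hom.add)
  have eq: "L ` {x + y |x y. x \<in> W \<and> y \<in> V} = {x + y |x y. x \<in> L ` W \<and> y \<in> L ` V}"
  proof
    show "L ` {x + y |x y. x \<in> W \<and> y \<in> V} \<subseteq> {x + y |x y. x \<in> L ` W \<and> y \<in> L ` V}"
      by (auto simp: add) blast
    show "{x + y |x y. x \<in> L ` W \<and> y \<in> L ` V} \<subseteq> L ` {x + y |x y. x \<in> W \<and> y \<in> V}"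
    proof
      fix z assume "z \<in> {x + y |x y. x \<in> L ` W \<and> y \<in> L ` V}"
      then obtain x y where "x \<in> W" "y \<in> V" "z = L (x + y)" by (auto simp only: add)
      then show "z \<in> L ` {x + y |x y. x \<in> W \<and> y \<in> V}" by blast
    qed
  qed
  have "fun_space.dim (L ` {x + y |x y. x \<in> W \<and> y \<in> V}) + fun_space.dim (L ` W \<inter> L ` V)
      = fun_space.dim (L ` W) + fun_space.dim (L ` V)"
    unfolding eq
    by (intro fin_fun_space.dim_sums_Int module_hom.subspace_image[OF L] W V)
  moreover have "L ` W \<inter> L ` V \<subseteq> {0}" using LW LV disj by blast
  then have "fun_space.dim (L ` W \<inter> L ` V) = 0" by (simp only: fin_fun_space.dim_eq_0)
  ultimately show ?thesis by simp
qed

definition cinner :: "('b::finite \<Rightarrow> complex) \<Rightarrow> ('b \<Rightarrow> complex) \<Rightarrow> complex" where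
  "cinner v w = (\<Sum>x\<in>UNIV. v x * cnj (w x))"

lemma cinner_add_left: "cinner (v + v') w = cinner v w + cinner v' w"
  by (simp add: cinner_def algebra_simps sum.distrib)

lemma cinner_diff_left: "cinner (v - v') w = cinner v w - cinner v' w"
  by (simp add: cinner_def algebra_simps sum_subtractf)

lemma cinner_scale_left: "cinner (fscale c v) w = c * cinner v w"
  by (simp add: cinner_def algebra_simps sum_distrib_left fscale_apply)

lemma cinner_zero_left: "cinner 0 w = 0"
  by (simp add: cinner_def)

lemma cinner_add_right: "cinner v (w + w') = cinner v w + cinner v w'"
  by (simp add: cinner_def algebra_simps sum.distrib)

lemma cinner_scale_right: "cinner v (fscale c w) = cnj c * cinner v w"
  by (simp add: cinner_def algebra_simps sum_distrib_left fscale_apply)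

lemma cinner_zero_right: "cinner v 0 = 0"
  by (simp add: cinner_def)

lemma cinner_self_eq_0: "cinner v v = 0 \<Longrightarrow> v = 0"
proof -
  assume h: "cinner v v = 0"
  have "cinner v v = complex_of_real (\<Sum>x\<in>UNIV. (cmod (v x))\<^sup>2)"
    unfolding cinner_def of_real_sum by (rule sum.cong) (simp_all only: complex_norm_square)
  with h have "(\<Sum>x\<in>UNIV. (cmod (v x))\<^sup>2) = 0" by (simp only: of_real_eq_0_iff)
  then have "\<forall>x\<in>UNIV. (cmod (v x))\<^sup>2 = 0"
    by (subst sum_nonneg_eq_0_iff[symmetric]) auto
  then show "v = 0" by (simp add: fun_eq_iff)
qed

lemma subspace_cinner_orthogonal: "fun_space.subspace {v. \<forall>b\<in>B. cinner v b = 0}"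
  by (auto simp: fun_space.subspace_def cinner_add_left cinner_scale_left cinner_zero_left)

lemma dim_le_dim_Int_hyperplane:
  fixes S :: "('b::finite \<Rightarrow> complex) set"
  assumes S: "fun_space.subspace S"
  shows "fun_space.dim S \<le> fun_space.dim (S \<inter> {v. cinner v b = 0}) + 1"
proof (cases "S \<subseteq> {v. cinner v b = 0}")
  case True then show ?thesis by (simp add: Int_absorb2)
next
  case False
  then obtain s where s: "s \<in> S" "cinner s b \<noteq> 0" by auto
  have "S \<subseteq> fun_space.span (insert s (S \<inter> {v. cinner v b = 0}))"
  proof
    fix v assume v: "v \<in> S"
    define l where "l = cinner v b / cinner s b"
    have "v - fscale l s \<in> S \<inter> {v. cinner v b = 0}"
      using S v s by (simp add: fun_space.subspace_diff fun_space.subspace_scale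
          cinner_diff_left cinner_scale_left l_def)
    then have "v - fscale l s + fscale l s \<in> fun_space.span (insert s (S \<inter> {v. cinner v b = 0}))"
      by (intro fun_space.span_add fun_space.span_scale fun_space.span_base) auto
    then show "v \<in> fun_space.span (insert s (S \<inter> {v. cinner v b = 0}))" by simp
  qed
  then have "fun_space.dim S \<le> fun_space.dim (insert s (S \<inter> {v. cinner v b = 0}))"
    by (rule fin_fun_space.dim_mono)
  also have "\<dots> \<le> fun_space.dim (S \<inter> {v. cinner v b = 0}) + 1"
    by (simp add: fin_fun_space.dim_insert)
  finally show ?thesis .
qed

lemma card_UNIV_le_dim_orthogonal:
  fixes B :: "('b::finite \<Rightarrow> complex) set"
  assumes "finite B"
  shows "card (UNIV :: 'b set) \<le> fun_space.dim {v. \<forall>b\<in>B. cinner v b = 0} + card B"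
  using assms
proof (induction B rule: finite_induct)
  case empty
  then show ?case using dim_UNIV_fun[where 'b='b and 'k=complex] by simp
next
  case (insert b B)
  have "{v. \<forall>b'\<in>insert b B. cinner v b' = 0} = {v. \<forall>b\<in>B. cinner v b = 0} \<inter> {v. cinner v b = 0}"
    by auto
  then show ?case
    using insert dim_le_dim_Int_hyperplane[OF subspace_cinner_orthogonal, of B b] by simp
qed

definition orth_compl :: "('b::finite \<Rightarrow> complex) set \<Rightarrow> ('b \<Rightarrow> complex) set" where
  "orth_compl W = {v. \<forall>w\<in>W. cinner v w = 0}"

lemma subspace_orth_compl: "fun_space.subspace (orth_compl W)"
  unfolding orth_compl_def by (rule subspace_cinner_orthogonal)

lemma Int_orth_compl_subset: "W \<inter> orth_compl W \<subseteq> {0}"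
  using cinner_self_eq_0 by (auto simp: orth_compl_def)

lemma orth_compl_basis:
  assumes "fun_space.span B = W"
  shows "orth_compl W = {v. \<forall>b\<in>B. cinner v b = 0}"
proof
  show "orth_compl W \<subseteq> {v. \<forall>b\<in>B. cinner v b = 0}"
    using assms fun_space.span_base by (auto simp: orth_compl_def)
  show "{v. \<forall>b\<in>B. cinner v b = 0} \<subseteq> orth_compl W"
  proof
    fix v assume v: "v \<in> {v. \<forall>b\<in>B. cinner v b = 0}"
    have "fun_space.span B \<subseteq> {w. cinner v w = 0}"
      by (rule fun_space.span_minimal)
         (use v in \<open>auto simp: fun_space.subspace_def cinner_add_right cinner_scale_right cinner_zero_right\<close>)
    then show "v \<in> orth_compl W" using assms by (auto simp: orth_compl_def)
  qed
qed

lemma orth_compl_decomp: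
  fixes W :: "('b::finite \<Rightarrow> complex) set"
  assumes W: "fun_space.subspace W"
  shows "\<exists>w\<in>W. \<exists>u\<in>orth_compl W. v = w + u"
proof -
  let ?sum = "{x + y |x y. x \<in> W \<and> y \<in> orth_compl W}"
  obtain B where B: "finite B" "fun_space.span B = W" "card B = fun_space.dim W"
    using fin_fun_space.basis_subspace_exists[OF W] by metis
  have "fun_space.dim ?sum + fun_space.dim (W \<inter> orth_compl W) = fun_space.dim W + fun_space.dim (orth_compl W)"
    by (rule fin_fun_space.dim_sums_Int[OF W subspace_orth_compl])
  moreover have "fun_space.dim (W \<inter> orth_compl W) = 0"
    using Int_orth_compl_subset by (simp only: fin_fun_space.dim_eq_0)
  moreover have "card (UNIV :: 'b set) \<le> fun_space.dim (orth_compl W) + fun_space.dim W"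
    using card_UNIV_le_dim_orthogonal[OF B(1)] B(3) orth_compl_basis[OF B(2)] by simp
  ultimately have "fun_space.dim (UNIV :: ('b \<Rightarrow> complex) set) \<le> fun_space.dim ?sum"
    using dim_UNIV_fun[where 'b='b and 'k=complex] by linarith
  then have "?sum = UNIV"
    by (intro fin_fun_space.subspace_dim_equal fun_space.subspace_sums W subspace_orth_compl
        fun_space.subspace_UNIV) auto
  then show ?thesis by blast
qed

definition complexify :: "('b \<Rightarrow> real) \<Rightarrow> ('b \<Rightarrow> complex)" where
  "complexify g = (\<lambda>x. complex_of_real (g x))"

lemma inj_complexify: "inj complexify"
  by (rule injI) (auto simp: complexify_def fun_eq_iff)

lemma complexify_sum:
  "complexify (\<Sum>b\<in>B. fscale (u b) b) = (\<Sum>b\<in>B. fscale (complex_of_real (u b)) (complexify b))"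
  by (rule ext) (simp add: complexify_def sum_fun_apply fscale_apply)

text \<open>Real and imaginary parts of a complex dependency among real vectors are real dependencies.\<close>

lemma independent_complexify:
  fixes B :: "('b::finite \<Rightarrow> real) set"
  assumes B: "fun_space.independent B"
  shows "fun_space.independent (complexify ` B)"
  unfolding fin_fun_space.independent_explicit
proof (intro conjI allI impI ballI)
  have finB: "finite B" using B fin_fun_space.finiteI_independent by blast
  then show "finite (complexify ` B)" by simp
  fix c v assume h: "(\<Sum>v\<in>complexify ` B. fscale (c v) v) = 0" and v: "v \<in> complexify ` B"
  have inj: "inj_on complexify B" using inj_complexify by (rule inj_on_subset) auto
  have h': "(\<Sum>b\<in>B. fscale (c (complexify b)) (complexify b)) x = 0" for x
    using h by (simp add: sum.reindex[OF inj])
  have indep: "\<And>c'. (\<Sum>v\<in>B. fscale (c' v) v) = 0 \<Longrightarrow> \<forall>v\<in>B. c' v = 0"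
    using B fin_fun_space.independent_explicit by blast
  have re: "(\<Sum>b\<in>B. fscale (Re (c (complexify b))) b) = 0"
    using arg_cong[OF h', of Re] by (simp add: fun_eq_iff sum_fun_apply fscale_apply complexify_def Re_sum)
  have im: "(\<Sum>b\<in>B. fscale (Im (c (complexify b))) b) = 0"
    using arg_cong[OF h', of Im] by (simp add: fun_eq_iff sum_fun_apply fscale_apply complexify_def Im_sum)
  obtain b where b: "b \<in> B" "v = complexify b" using v by auto
  have "Re (c v) = 0" "Im (c v) = 0" using indep[OF re] indep[OF im] b by auto
  then show "c v = 0" by (simp add: complex_eq_iff)
qed

lemma dim_span_complexify:
  fixes G :: "('b::finite \<Rightarrow> real) set"
  shows "fun_space.dim (fun_space.span G) = fun_space.dim (fun_space.span (complexify ` G))"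
proof -
  obtain B where B: "B \<subseteq> G" "fun_space.independent B" "G \<subseteq> fun_space.span B" "card B = fun_space.dim G"
    using fun_space.basis_exists by metis
  have finB: "finite B" using B(2) fin_fun_space.finiteI_independent by blast
  have "fun_space.dim (complexify ` G) = card (complexify ` B)"
  proof (rule fun_space.dim_unique)
    show "complexify ` G \<subseteq> fun_space.span (complexify ` B)"
    proof
      fix h assume "h \<in> complexify ` G"
      then obtain g where g: "g \<in> G" "h = complexify g" by auto
      then obtain u where "g = (\<Sum>b\<in>B. fscale (u b) b)"
        using B(3) fun_space.span_finite[OF finB] by auto
      then have "h = (\<Sum>b\<in>B. fscale (complex_of_real (u b)) (complexify b))"
        using g complexify_sum by simp
      also have "\<dots> \<in> fun_space.span (complexify ` B)"
        by (intro fun_space.span_sum fun_space.span_scale fun_space.span_base) auto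
      finally show "h \<in> fun_space.span (complexify ` B)" .
    qed
  qed (use B independent_complexify in auto)
  also have "\<dots> = card B"
    by (rule card_image) (rule inj_on_subset[OF inj_complexify], auto)
  finally show ?thesis using B(4) by simp
qed

section \<open>Distance in a \<open>P\<close>-polynomial scheme\<close>

locale pscheme =
  fixes d :: nat and R :: "nat \<Rightarrow> ('a::finite \<times> 'a) set"
  assumes scheme: "P_polynomial_scheme d R"
begin

lemma assoc_scheme: "symmetric_assoc_scheme d R"
  using scheme by (simp add: P_polynomial_scheme_def)

lemma R_0: "R 0 = Id"
  using assoc_scheme by (simp add: symmetric_assoc_scheme_def)

lemma R_nonempty: "i \<le> d \<Longrightarrow> R i \<noteq> {}"
  using assoc_scheme by (simp add: symmetric_assoc_scheme_def)

lemma ex1_R: "\<exists>!i. i \<le> d \<and> (x, y) \<in> R i"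
  using assoc_scheme by (simp add: symmetric_assoc_scheme_def)

lemma R_sym: "i \<le> d \<Longrightarrow> (x, y) \<in> R i \<Longrightarrow> (y, x) \<in> R i"
  using assoc_scheme by (simp add: symmetric_assoc_scheme_def)

lemma R_eq_graph_dist: "i \<le> d \<Longrightarrow> (x, y) \<in> R i \<longleftrightarrow> graph_dist_is (R 1) i x y"
  using scheme by (simp add: P_polynomial_scheme_def)

definition dist :: "'a \<Rightarrow> 'a \<Rightarrow> nat" where
  "dist x y = (THE i. i \<le> d \<and> (x, y) \<in> R i)"

lemma dist_le_diameter: "dist x y \<le> d" and in_R_dist: "(x, y) \<in> R (dist x y)"
  using theI'[OF ex1_R[of x y]] by (simp_all add: dist_def)

lemma in_R_iff_dist: "i \<le> d \<Longrightarrow> (x, y) \<in> R i \<longleftrightarrow> dist x y = i"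
  using ex1_R[of x y] dist_le_diameter[of x y] in_R_dist[of x y] by blast

lemma dist_commute: "dist x y = dist y x"
proof -
  have "(y, x) \<in> R (dist x y)" using R_sym dist_le_diameter in_R_dist by blast
  then show ?thesis using in_R_iff_dist[OF dist_le_diameter[of x y]] by simp
qed

lemma dist_eq_0_iff: "dist x y = 0 \<longleftrightarrow> x = y"
  using in_R_iff_dist[of 0 x y] R_0 by auto

lemma graph_dist_is_dist: "graph_dist_is (R 1) (dist x y) x y"
  using R_eq_graph_dist dist_le_diameter in_R_dist by blast

lemma dist_le_if_relpow: "(x, y) \<in> R 1 ^^ k \<Longrightarrow> dist x y \<le> k"
  using graph_dist_is_dist[of x y] unfolding graph_dist_is_def by (meson not_le)

lemma relpow_dist: "(x, y) \<in> R 1 ^^ dist x y"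
  using graph_dist_is_dist[of x y] by (simp add: graph_dist_is_def)

lemma dist_triangle: "dist x z \<le> dist x y + dist y z"
  using relpow_dist[of x y] relpow_dist[of y z]
  by (intro dist_le_if_relpow) (auto simp: relpow_add)

lemma dist_le_1_if_R_1: "(x, y) \<in> R 1 \<Longrightarrow> dist x y \<le> 1"
  by (rule dist_le_if_relpow) simp

lemma card_eq_int_num:
  assumes "h \<le> d" "i \<le> d" "j \<le> d" "(x, y) \<in> R h"
  shows "card {z. (x, z) \<in> R i \<and> (z, y) \<in> R j} = int_num R h i j"
proof -
  obtain n where n: "\<forall>x y. (x, y) \<in> R h \<longrightarrow> card {z. (x, z) \<in> R i \<and> (z, y) \<in> R j} = n"
    using assoc_scheme assms(1-3) unfolding symmetric_assoc_scheme_def by meson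
  have "(SOME p. p \<in> R h) \<in> R h" using R_nonempty[OF assms(1)] by (simp add: some_in_eq)
  then have "int_num R h i j = n" using n
    by (auto simp: int_num_def split: prod.splits)
  then show ?thesis using n assms(4) by simp
qed

lemma card_eq_c_num:
  assumes "1 \<le> k" "k \<le> d" "dist x y = k"
  shows "card {z. dist x z = 1 \<and> dist z y = k - 1} = c_num R k"
proof -
  have "{z. dist x z = 1 \<and> dist z y = k - 1} = {z. (x, z) \<in> R 1 \<and> (z, y) \<in> R (k - 1)}"
    using assms in_R_iff_dist by auto
  also have "card \<dots> = int_num R k 1 (k - 1)"
    using assms by (intro card_eq_int_num) (auto simp: in_R_iff_dist)
  finally show ?thesis by (simp add: c_num_def)
qed

lemma c_num_pos:
  assumes "1 \<le> k" "k \<le> d"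
  shows "c_num R k \<ge> 1"
proof -
  obtain x y where "(x, y) \<in> R k" using R_nonempty[OF assms(2)] by auto
  then have dk: "dist x y = k" using in_R_iff_dist assms by auto
  then have "(x, y) \<in> R 1 ^^ Suc (k - 1)"
    using relpow_dist[of x y] assms(1) by (simp add: Suc_diff_1)
  then obtain z where z: "(x, z) \<in> R 1" "(z, y) \<in> R 1 ^^ (k - 1)"
    by (rule relpow_Suc_E2)
  have "dist z y \<le> k - 1" using z(2) dist_le_if_relpow by blast
  moreover have "dist x y \<le> dist x z + dist z y" by (rule dist_triangle)
  moreover have "dist x z \<le> 1" using z(1) dist_le_1_if_R_1 by blast
  ultimately have "dist x z = 1" "dist z y = k - 1" using dk assms(1) by linarith+
  then have "z \<in> {z. dist x z = 1 \<and> dist z y = k - 1}" by simp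
  then have "card {z. dist x z = 1 \<and> dist z y = k - 1} > 0"
    by (subst card_gt_0_iff) auto
  then show ?thesis using card_eq_c_num[OF assms dk] by linarith
qed

definition c_prod :: "nat \<Rightarrow> real" where
  "c_prod m = (\<Prod>s = 1..m. real (c_num R s))"

lemma c_prod_Suc: "c_prod (Suc m) = c_prod m * real (c_num R (Suc m))"
  by (simp add: c_prod_def)

lemma c_prod_nonzero: "m \<le> d \<Longrightarrow> c_prod m \<noteq> 0"
  using c_num_pos by (fastforce simp: c_prod_def prod_zero_iff)

end

section \<open>The Terwilliger algebra acting on \<open>\<complex>\<^sup>X\<close>\<close>

lemma module_hom_cmat_apply: "module_hom fscale fscale (cmat_apply M)"
  by unfold_locales
     (auto simp: cmat_apply_def fscale_def algebra_simps fun_eq_iff sum.distrib sum_distrib_left)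

interpretation cmat_apply: module_hom fscale fscale "cmat_apply M" for M
  by (rule module_hom_cmat_apply)

lemma sum_if_const: "(\<Sum>z\<in>(UNIV::'a::finite set). if P z then (c::complex) else 0) = of_nat (card {z. P z}) * c"
proof -
  have "(\<Sum>z\<in>(UNIV::'a set). if P z then c else 0) = (\<Sum>z\<in>{z. P z}. c)"
    by (rule sum.mono_neutral_cong_right) auto
  then show ?thesis by simp
qed

lemma cmat_apply_add_mat: "cmat_apply (\<lambda>x y. M x y + N x y) v = cmat_apply M v + cmat_apply N v"
  by (rule ext) (simp add: cmat_apply_def algebra_simps sum.distrib)

lemma cmat_apply_scale_mat: "cmat_apply (\<lambda>x y. c * M x y) v = fscale c (cmat_apply M v)"
  by (rule ext) (simp add: cmat_apply_def algebra_simps sum_distrib_left fscale_apply)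

lemma cmat_apply_mult: "cmat_apply (cmat_mult M N) (v :: 'a::finite \<Rightarrow> complex) = cmat_apply M (cmat_apply N v)"
proof (rule ext)
  fix x
  have "cmat_apply (cmat_mult M N) v x = (\<Sum>y\<in>UNIV. \<Sum>z\<in>UNIV. M x z * N z y * v y)"
    by (simp add: cmat_apply_def cmat_mult_def sum_distrib_right)
  also have "\<dots> = (\<Sum>z\<in>UNIV. \<Sum>y\<in>UNIV. M x z * N z y * v y)" by (rule sum.swap)
  also have "\<dots> = cmat_apply M (cmat_apply N v) x"
    by (simp add: cmat_apply_def sum_distrib_left mult.assoc)
  finally show "cmat_apply (cmat_mult M N) v x = cmat_apply M (cmat_apply N v) x" .
qed

locale pscheme_vertex = pscheme d R for d :: nat and R :: "nat \<Rightarrow> ('a::finite \<times> 'a) set" +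
  fixes u0 :: 'a
begin

abbreviation Aop :: "nat \<Rightarrow> ('a \<Rightarrow> complex) \<Rightarrow> ('a \<Rightarrow> complex)" where
  "Aop h v \<equiv> cmat_apply (adj_mat R h) v"
abbreviation Eop :: "nat \<Rightarrow> ('a \<Rightarrow> complex) \<Rightarrow> ('a \<Rightarrow> complex)" where
  "Eop l v \<equiv> cmat_apply (dual_idem R u0 l) v"

lemma Aop_apply: "h \<le> d \<Longrightarrow> Aop h v x = (\<Sum>y\<in>UNIV. if dist x y = h then v y else 0)"
  unfolding cmat_apply_def adj_mat_def by (intro sum.cong) (auto simp: in_R_iff_dist)

lemma Eop_apply: "l \<le> d \<Longrightarrow> Eop l v x = (if dist u0 x = l then v x else 0)"
proof -
  assume l: "l \<le> d"
  have "Eop l v x = (\<Sum>y\<in>UNIV. if y = x then (if dist u0 x = l then v x else 0) else 0)"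
    unfolding cmat_apply_def dual_idem_def using in_R_iff_dist[OF l] by (intro sum.cong) auto
  also have "\<dots> = (if dist u0 x = l then v x else 0)" by simp
  finally show ?thesis .
qed

lemma Aop_0: "Aop 0 v = v"
proof (rule ext)
  fix x
  have "Aop 0 v x = (\<Sum>y\<in>UNIV. if y = x then v y else 0)"
    unfolding Aop_apply[OF le0] by (intro sum.cong) (auto simp: dist_eq_0_iff)
  then show "Aop 0 v x = v x" by simp
qed

lemma Eop_Eop: "l \<le> d \<Longrightarrow> m \<le> d \<Longrightarrow> Eop l (Eop m v) = (if l = m then Eop m v else 0)"
  by (rule ext) (auto simp: Eop_apply)

lemma Aop_1_Aop_apply:
  assumes "1 \<le> d" "m \<le> d"
  shows "Aop 1 (\<lambda>z. if P z then Aop m w z else 0) x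
       = (\<Sum>y\<in>UNIV. of_nat (card {z. dist x z = 1 \<and> P z \<and> dist z y = m}) * w y)"
proof -
  have "Aop 1 (\<lambda>z. if P z then Aop m w z else 0) x
      = (\<Sum>z\<in>UNIV. if dist x z = 1 then (if P z then \<Sum>y\<in>UNIV. if dist z y = m then w y else 0 else 0) else 0)"
    using assms by (simp only: Aop_apply)
  also have "\<dots> = (\<Sum>z\<in>UNIV. \<Sum>y\<in>UNIV. if dist x z = 1 \<and> P z \<and> dist z y = m then w y else 0)"
    by (intro sum.cong) auto
  also have "\<dots> = (\<Sum>y\<in>UNIV. \<Sum>z\<in>UNIV. if dist x z = 1 \<and> P z \<and> dist z y = m then w y else 0)"
    by (rule sum.swap)
  also have "\<dots> = (\<Sum>y\<in>UNIV. of_nat (card {z. dist x z = 1 \<and> P z \<and> dist z y = m}) * w y)"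
    by (intro sum.cong refl) (simp only: sum_if_const)
  finally show ?thesis .
qed

lemma card_A1_Ah:
  assumes h: "1 \<le> h" "h + 1 \<le> d"
  shows "card {z. dist x z = 1 \<and> dist z y = h}
       = (if dist x y \<in> {h + 1, h, h - 1} then int_num R (dist x y) 1 h else 0)"
proof (cases "dist x y \<in> {h + 1, h, h - 1}")
  case True
  have "{z. dist x z = 1 \<and> dist z y = h} = {z. (x, z) \<in> R 1 \<and> (z, y) \<in> R h}"
    using h in_R_iff_dist by auto
  then show ?thesis
    using True h card_eq_int_num[OF dist_le_diameter, of 1 h x y] in_R_dist by simp
next
  case False
  have "{z. dist x z = 1 \<and> dist z y = h} = {}"
  proof (rule ccontr)
    assume "{z. dist x z = 1 \<and> dist z y = h} \<noteq> {}"
    then obtain z where z: "dist x z = 1" "dist z y = h" by auto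
    have "dist x y \<le> dist x z + dist z y" "dist z y \<le> dist z x + dist x y"
      by (rule dist_triangle)+
    moreover have "dist x y \<noteq> h + 1" "dist x y \<noteq> h" "dist x y \<noteq> h - 1" using False by auto
    ultimately show False using z dist_commute[of z x] by linarith
  qed
  then show ?thesis using False by simp
qed

text \<open>The three-term recurrence \<open>A\<^sub>1 A\<^sub>h = b A\<^sub>h\<^sub>+\<^sub>1 + a A\<^sub>h + c A\<^sub>h\<^sub>-\<^sub>1\<close>
  with \<open>b = c\<^sub>h\<^sub>+\<^sub>1 > 0\<close> makes every \<open>A\<^sub>h\<close> a polynomial in \<open>A\<^sub>1\<close>.\<close>

lemma A1_Ah_recurrence:
  assumes h: "1 \<le> h" "h + 1 \<le> d"
  shows "Aop 1 (Aop h v) = fscale (of_nat (int_num R (h + 1) 1 h)) (Aop (h + 1) v)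
     + fscale (of_nat (int_num R h 1 h)) (Aop h v) + fscale (of_nat (int_num R (h - 1) 1 h)) (Aop (h - 1) v)"
proof (rule ext)
  fix x
  have "Aop 1 (Aop h v) x = (\<Sum>y\<in>UNIV. of_nat (card {z. dist x z = 1 \<and> dist z y = h}) * v y)"
    using Aop_1_Aop_apply[of h "\<lambda>_. True" v x] h by simp
  also have "\<dots> = (\<Sum>y\<in>UNIV. of_nat (int_num R (h + 1) 1 h) * (if dist x y = h + 1 then v y else 0)
      + of_nat (int_num R h 1 h) * (if dist x y = h then v y else 0)
      + of_nat (int_num R (h - 1) 1 h) * (if dist x y = h - 1 then v y else 0))"
  proof (intro sum.cong refl)
    fix y
    have "h - 1 \<noteq> h + 1" "h - 1 \<noteq> h" using h by linarith+
    then show "of_nat (card {z. dist x z = 1 \<and> dist z y = h}) * v y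
        = of_nat (int_num R (h + 1) 1 h) * (if dist x y = h + 1 then v y else 0)
          + of_nat (int_num R h 1 h) * (if dist x y = h then v y else 0)
          + of_nat (int_num R (h - 1) 1 h) * (if dist x y = h - 1 then v y else 0)"
      unfolding card_A1_Ah[OF h] by auto
  qed
  also have "\<dots> = (fscale (of_nat (int_num R (h + 1) 1 h)) (Aop (h + 1) v)
     + fscale (of_nat (int_num R h 1 h)) (Aop h v) + fscale (of_nat (int_num R (h - 1) 1 h)) (Aop (h - 1) v)) x"
    using h by (simp add: fscale_apply Aop_apply sum.distrib sum_distrib_left)
  finally show "Aop 1 (Aop h v) x = (fscale (of_nat (int_num R (h + 1) 1 h)) (Aop (h + 1) v)
     + fscale (of_nat (int_num R h 1 h)) (Aop h v) + fscale (of_nat (int_num R (h - 1) 1 h)) (Aop (h - 1) v)) x" .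
qed

lemma Aop_closed:
  assumes U: "fun_space.subspace U" and A1: "1 \<le> d \<Longrightarrow> \<forall>v\<in>U. Aop 1 v \<in> U"
  shows "h \<le> d \<Longrightarrow> v \<in> U \<Longrightarrow> Aop h v \<in> U"
proof (induction h arbitrary: v rule: less_induct)
  case (less h)
  consider "h = 0" | "h = 1" | "h \<ge> 2" by linarith
  then show ?case
  proof cases
    case 1 then show ?thesis using less by (simp add: Aop_0)
  next
    case 2 then show ?thesis using less A1 by auto
  next
    case 3
    define g where "g = h - 1"
    have g1: "1 \<le> g" and gd: "g + 1 \<le> d" and hg: "h = g + 1" using 3 less g_def by auto
    have IHg: "Aop g v \<in> U" using less hg by auto
    have IHg1: "Aop (g - 1) v \<in> U" using less hg by auto
    have AAg: "Aop 1 (Aop g v) \<in> U" using A1 IHg gd by auto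
    define c where "c = (of_nat (int_num R (g + 1) 1 g) :: complex)"
    have "c_num R (g + 1) \<ge> 1" using c_num_pos[of "g + 1"] gd by simp
    then have "int_num R (g + 1) 1 g \<ge> 1" by (simp add: c_num_def)
    then have c0: "c \<noteq> 0" by (simp add: c_def)
    have rec: "Aop 1 (Aop g v) = fscale c (Aop (g + 1) v)
      + fscale (of_nat (int_num R g 1 g)) (Aop g v) + fscale (of_nat (int_num R (g - 1) 1 g)) (Aop (g - 1) v)"
      unfolding c_def by (rule A1_Ah_recurrence[OF g1 gd])
    have "Aop (g + 1) v = fscale (1 / c) (Aop 1 (Aop g v) - fscale (of_nat (int_num R g 1 g)) (Aop g v)
       - fscale (of_nat (int_num R (g - 1) 1 g)) (Aop (g - 1) v))"
      unfolding rec using c0 by (simp add: fun_eq_iff fscale_apply)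
    also have "\<dots> \<in> U"
      using U AAg IHg IHg1 by (intro fun_space.subspace_scale fun_space.subspace_diff) auto
    finally show ?thesis using hg by simp
  qed
qed

lemma T_moduleI:
  assumes U: "fun_space.subspace U" and A1: "1 \<le> d \<Longrightarrow> \<forall>v\<in>U. Aop 1 v \<in> U"
    and E: "\<And>l v. l \<le> d \<Longrightarrow> v \<in> U \<Longrightarrow> Eop l v \<in> U"
  shows "T_module d R u0 U"
  unfolding T_module_def
proof (intro conjI ballI)
  show "module.subspace fscale U" using U .
  fix M v assume M: "M \<in> terwilliger_alg d R u0" and v: "v \<in> U"
  from M v show "cmat_apply M v \<in> U"
  proof (induction arbitrary: v rule: terwilliger_alg.induct)
    case (gen_A i) then show ?case using Aop_closed[OF U A1] by blast
  next
    case (gen_E i) then show ?case using E by blast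
  next
    case (add M N) then show ?case using U unfolding cmat_apply_add_mat by (metis fun_space.subspace_add)
  next
    case (mult M N) then show ?case by (simp add: cmat_apply_mult)
  next
    case (smult M c) then show ?case using U unfolding cmat_apply_scale_mat by (metis fun_space.subspace_scale)
  qed
qed

lemma T_module_subspace: "T_module d R u0 W \<Longrightarrow> fun_space.subspace W"
  by (simp add: T_module_def)
lemma T_module_Aop: "T_module d R u0 W \<Longrightarrow> h \<le> d \<Longrightarrow> w \<in> W \<Longrightarrow> Aop h w \<in> W"
  by (auto simp: T_module_def intro: terwilliger_alg.gen_A)
lemma T_module_Eop: "T_module d R u0 W \<Longrightarrow> l \<le> d \<Longrightarrow> w \<in> W \<Longrightarrow> Eop l w \<in> W"
  by (auto simp: T_module_def intro: terwilliger_alg.gen_E)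

lemma T_module_Int: "T_module d R u0 U \<Longrightarrow> T_module d R u0 V \<Longrightarrow> T_module d R u0 (U \<inter> V)"
  by (auto simp: T_module_def fun_space.subspace_def)

lemma cinner_Aop: "h \<le> d \<Longrightarrow> cinner (Aop h v) w = cinner v (Aop h w)"
proof -
  assume h: "h \<le> d"
  have "cinner (Aop h v) w = (\<Sum>x\<in>UNIV. (\<Sum>y\<in>UNIV. if dist x y = h then v y else 0) * cnj (w x))"
    unfolding cinner_def Aop_apply[OF h] ..
  also have "\<dots> = (\<Sum>x\<in>UNIV. \<Sum>y\<in>UNIV. if dist x y = h then v y * cnj (w x) else 0)"
    unfolding sum_distrib_right by (intro sum.cong refl) auto
  also have "\<dots> = (\<Sum>y\<in>UNIV. \<Sum>x\<in>UNIV. if dist x y = h then v y * cnj (w x) else 0)"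
    by (rule sum.swap)
  also have "\<dots> = (\<Sum>y\<in>UNIV. v y * (\<Sum>x\<in>UNIV. if dist y x = h then cnj (w x) else 0))"
    unfolding sum_distrib_left by (intro sum.cong refl) (auto simp: dist_commute)
  also have "\<dots> = cinner v (Aop h w)"
    unfolding cinner_def Aop_apply[OF h] cnj_sum by (intro sum.cong refl) (auto intro!: sum.cong)
  finally show ?thesis .
qed

lemma cinner_Eop: "l \<le> d \<Longrightarrow> cinner (Eop l v) w = cinner v (Eop l w)"
  unfolding cinner_def by (intro sum.cong) (auto simp: Eop_apply)

lemma T_module_orth_compl:
  assumes W: "T_module d R u0 W"
  shows "T_module d R u0 (orth_compl W)"
proof (rule T_moduleI)
  show "fun_space.subspace (orth_compl W)" by (rule subspace_orth_compl)
  show "\<forall>v\<in>orth_compl W. Aop 1 v \<in> orth_compl W" if "1 \<le> d"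
    using that T_module_Aop[OF W, of 1] by (auto simp: orth_compl_def cinner_Aop)
  show "Eop l v \<in> orth_compl W" if "l \<le> d" "v \<in> orth_compl W" for l v
    using that T_module_Eop[OF W, of l] by (auto simp: orth_compl_def cinner_Eop)
qed

lemma card_raising_path:
  assumes jr: "j \<le> r" and rd: "r + 1 \<le> d" and x: "dist u0 x = r + 1" and y: "dist u0 y = j"
  shows "card {z. dist x z = 1 \<and> dist u0 z = r \<and> dist z y = r - j}
       = (if dist x y = r + 1 - j then c_num R (r + 1 - j) else 0)"
proof (cases "dist x y = r + 1 - j")
  case True
  have "{z. dist x z = 1 \<and> dist u0 z = r \<and> dist z y = r - j} = {z. dist x z = 1 \<and> dist z y = (r + 1 - j) - 1}"
  proof (intro equalityI subsetI)
    fix z assume "z \<in> {z. dist x z = 1 \<and> dist u0 z = r \<and> dist z y = r - j}"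
    then show "z \<in> {z. dist x z = 1 \<and> dist z y = (r + 1 - j) - 1}" using jr by auto
  next
    fix z assume z: "z \<in> {z. dist x z = 1 \<and> dist z y = (r + 1 - j) - 1}"
    have "dist u0 z \<le> dist u0 y + dist y z" by (rule dist_triangle)
    moreover have "dist u0 x \<le> dist u0 z + dist z x" by (rule dist_triangle)
    ultimately show "z \<in> {z. dist x z = 1 \<and> dist u0 z = r \<and> dist z y = r - j}"
      using z x y jr dist_commute[of y z] dist_commute[of z x] by auto
  qed
  also have "card \<dots> = c_num R (r + 1 - j)"
    using True jr rd by (intro card_eq_c_num) auto
  finally show ?thesis using True by simp
next
  case False
  have "{z. dist x z = 1 \<and> dist u0 z = r \<and> dist z y = r - j} = {}"
  proof (rule ccontr)
    assume "{z. dist x z = 1 \<and> dist u0 z = r \<and> dist z y = r - j} \<noteq> {}"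
    then obtain z where z: "dist x z = 1" "dist z y = r - j" by auto
    have "dist x y \<le> dist x z + dist z y" by (rule dist_triangle)
    moreover have "dist u0 x \<le> dist u0 y + dist y x" by (rule dist_triangle)
    ultimately show False using False z x y jr dist_commute[of y x] by linarith
  qed
  then show ?thesis using False by simp
qed

lemma Eop_A1_Eop_Aop:
  assumes jr: "j \<le> r" and rd: "r + 1 \<le> d"
  shows "Eop (r + 1) (Aop 1 (Eop r (Aop (r - j) (Eop j v))))
       = fscale (of_nat (c_num R (r + 1 - j))) (Eop (r + 1) (Aop (r + 1 - j) (Eop j v)))"
proof (rule ext)
  fix x
  have Eop_r: "Eop r w = (\<lambda>z. if dist u0 z = r then w z else 0)" for w
    using rd by (auto simp: Eop_apply)
  show "Eop (r + 1) (Aop 1 (Eop r (Aop (r - j) (Eop j v)))) x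
       = fscale (of_nat (c_num R (r + 1 - j))) (Eop (r + 1) (Aop (r + 1 - j) (Eop j v))) x"
  proof (cases "dist u0 x = r + 1")
    case True
    have "Eop (r + 1) (Aop 1 (Eop r (Aop (r - j) (Eop j v)))) x
        = (\<Sum>y\<in>UNIV. of_nat (card {z. dist x z = 1 \<and> dist u0 z = r \<and> dist z y = r - j}) * Eop j v y)"
      using True rd Aop_1_Aop_apply[of "r - j" "\<lambda>z. dist u0 z = r" "Eop j v" x]
      by (simp add: Eop_apply Eop_r)
    also have "\<dots> = (\<Sum>y\<in>UNIV. of_nat (c_num R (r + 1 - j)) * (if dist x y = r + 1 - j then Eop j v y else 0))"
    proof (intro sum.cong refl)
      fix y
      show "of_nat (card {z. dist x z = 1 \<and> dist u0 z = r \<and> dist z y = r - j}) * Eop j v y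
          = of_nat (c_num R (r + 1 - j)) * (if dist x y = r + 1 - j then Eop j v y else 0)"
        using card_raising_path[OF jr rd True] jr rd by (cases "dist u0 y = j") (auto simp: Eop_apply)
    qed
    also have "\<dots> = fscale (of_nat (c_num R (r + 1 - j))) (Eop (r + 1) (Aop (r + 1 - j) (Eop j v))) x"
      using True rd by (simp add: fscale_apply Eop_apply Aop_apply sum_distrib_left)
    finally show ?thesis .
  qed (use rd in \<open>simp add: fscale_apply Eop_apply\<close>)
qed

lemma fz_apply:
  assumes j: "j \<le> d"
  shows "fz d R u0 j z x = (if j \<le> dist u0 x \<and> dist x z = dist u0 x - j then 1 else 0)"
proof -
  have "(\<exists>i. j \<le> i \<and> i \<le> d \<and> (u0, x) \<in> R i \<and> (x, z) \<in> R (i - j))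
      \<longleftrightarrow> j \<le> dist u0 x \<and> dist x z = dist u0 x - j"
  proof
    assume "\<exists>i. j \<le> i \<and> i \<le> d \<and> (u0, x) \<in> R i \<and> (x, z) \<in> R (i - j)"
    then obtain i where "j \<le> i" "i \<le> d" "(u0, x) \<in> R i" "(x, z) \<in> R (i - j)" by blast
    then show "j \<le> dist u0 x \<and> dist x z = dist u0 x - j"
      using in_R_iff_dist[of i] in_R_iff_dist[of "i - j"] by auto
  next
    assume "j \<le> dist u0 x \<and> dist x z = dist u0 x - j"
    then show "\<exists>i. j \<le> i \<and> i \<le> d \<and> (u0, x) \<in> R i \<and> (x, z) \<in> R (i - j)"
      using in_R_dist dist_le_diameter by metis
  qed
  then show ?thesis by (simp add: fz_def)
qed

lemma Eop_unit_fun: "j \<le> d \<Longrightarrow> Eop j (unit_fun z) = (if j = dist u0 z then unit_fun z else 0)"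
  by (rule ext) (auto simp: Eop_apply unit_fun_def)

lemma Eop_Aop_unit_fun:
  assumes "j \<le> d" "m \<le> d"
  shows "Eop j (Aop m (unit_fun z)) x = (if dist u0 x = j \<and> dist x z = m then 1 else 0)"
proof -
  have "(\<Sum>y\<in>UNIV. if dist x y = m then (unit_fun z y :: complex) else 0)
      = (\<Sum>y\<in>UNIV. if y = z then (if dist x z = m then 1 else 0) else 0)"
    by (intro sum.cong refl) (auto simp: unit_fun_def)
  then show ?thesis using assms by (simp add: Eop_apply Aop_apply)
qed

lemma dim_Eop_UNIV: "j \<le> d \<Longrightarrow> fun_space.dim (Eop j ` UNIV) = kval R u0 j"
proof -
  assume j: "j \<le> d"
  have "Eop j ` UNIV = {f :: 'a \<Rightarrow> complex. \<forall>x. x \<notin> shell R u0 j \<longrightarrow> f x = 0}"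
  proof
    show "Eop j ` UNIV \<subseteq> {f. \<forall>x. x \<notin> shell R u0 j \<longrightarrow> f x = 0}"
      using j in_R_iff_dist by (auto simp: Eop_apply shell_def)
    show "{f. \<forall>x. x \<notin> shell R u0 j \<longrightarrow> f x = 0} \<subseteq> Eop j ` UNIV"
    proof
      fix f :: "'a \<Rightarrow> complex" assume "f \<in> {f. \<forall>x. x \<notin> shell R u0 j \<longrightarrow> f x = 0}"
      then have "Eop j f = f" using j in_R_iff_dist by (auto simp: Eop_apply shell_def fun_eq_iff)
      then show "f \<in> Eop j ` UNIV" by (metis rangeI)
    qed
  qed
  then show ?thesis using dim_vanishing_outside by (simp add: kval_def)
qed

section \<open>Irreducible and thin \<open>T\<close>-modules\<close>

lemma A1_vanishes_above:
  assumes d1: "1 \<le> d" and v: "\<forall>y. i < dist u0 y \<longrightarrow> v y = 0" and x: "i + 1 < dist u0 x"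
  shows "Aop 1 v x = 0"
proof -
  have "Aop 1 v x = (\<Sum>y\<in>UNIV. if dist x y = 1 then v y else 0)" by (rule Aop_apply[OF d1])
  also have "\<dots> = 0"
  proof (rule sum.neutral, rule ballI)
    fix y
    have "dist u0 x \<le> dist u0 y + dist y x" by (rule dist_triangle)
    then show "(if dist x y = 1 then v y else 0) = 0" using v x dist_commute[of y x] by auto
  qed
  finally show ?thesis by simp
qed

lemma Eop_A1_top_layer:
  assumes d1: "i + 1 \<le> d" and v: "\<forall>y. i < dist u0 y \<longrightarrow> v y = 0"
  shows "Eop (i + 1) (Aop 1 v) = Eop (i + 1) (Aop 1 (Eop i v))"
proof (rule ext)
  fix x
  have d1': "1 \<le> d" and di: "i \<le> d" using d1 by auto
  show "Eop (i + 1) (Aop 1 v) x = Eop (i + 1) (Aop 1 (Eop i v)) x"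
    unfolding Eop_apply[OF d1] Aop_apply[OF d1'] Eop_apply[OF di]
  proof (cases "dist u0 x = i + 1")
    case True
    have "(\<Sum>y\<in>UNIV. if dist x y = 1 then v y else 0) = (\<Sum>y\<in>UNIV. if dist x y = 1 then (if dist u0 y = i then v y else 0) else 0)"
    proof (intro sum.cong refl)
      fix y
      have "dist u0 x \<le> dist u0 y + dist y x" by (rule dist_triangle)
      then show "(if dist x y = 1 then v y else 0) = (if dist x y = 1 then (if dist u0 y = i then v y else 0) else 0)"
        using v True dist_commute[of y x] by auto
    qed
    then show "(if dist u0 x = i + 1 then \<Sum>y\<in>UNIV. if dist x y = 1 then v y else 0 else 0) =
      (if dist u0 x = i + 1 then \<Sum>y\<in>UNIV. if dist x y = 1 then if dist u0 y = i then v y else 0 else 0 else 0)"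
      by simp
  qed simp
qed

text \<open>If the raising map of \<open>W\<close> at distance \<open>i\<close> is zero, the vectors of \<open>W\<close> vanishing
  beyond distance \<open>i\<close> form a \<open>T\<close>-submodule.\<close>

lemma irreducible_vanishes_above:
  assumes W: "T_module d R u0 W"
    and irr: "\<forall>W'. T_module d R u0 W' \<and> W' \<subseteq> W \<longrightarrow> W' = {0} \<or> W' = W"
    and i: "i + 1 \<le> d" and raise0: "\<forall>w\<in>W. Eop (i + 1) (Aop 1 (Eop i w)) = 0"
    and nz: "\<exists>w\<in>W. w \<noteq> 0 \<and> (\<forall>y. i < dist u0 y \<longrightarrow> w y = 0)"
  shows "\<forall>w\<in>W. \<forall>y. i < dist u0 y \<longrightarrow> w y = 0"
proof -
  define U where "U = {w\<in>W. \<forall>y. i < dist u0 y \<longrightarrow> w y = 0}"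
  have sW: "fun_space.subspace W" using W by (rule T_module_subspace)
  have TU: "T_module d R u0 U"
  proof (rule T_moduleI)
    show "fun_space.subspace U"
      using sW unfolding U_def fun_space.subspace_def by (auto simp: fscale_apply)
    show "\<forall>v\<in>U. Aop 1 v \<in> U" if d1: "1 \<le> d"
    proof
      fix v assume v: "v \<in> U"
      have vW: "v \<in> W" and vs: "\<forall>y. i < dist u0 y \<longrightarrow> v y = 0" using v by (auto simp: U_def)
      have "Aop 1 v y = 0" if y: "i < dist u0 y" for y
      proof (cases "dist u0 y = i + 1")
        case True
        have "Aop 1 v y = Eop (i + 1) (Aop 1 v) y" using True i by (simp add: Eop_apply)
        also have "\<dots> = Eop (i + 1) (Aop 1 (Eop i v)) y" by (simp only: Eop_A1_top_layer[OF i vs])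
        also have "\<dots> = 0" using raise0 vW by simp
        finally show ?thesis .
      next
        case False
        then show ?thesis using A1_vanishes_above[OF d1 vs] y by simp
      qed
      then show "Aop 1 v \<in> U" using T_module_Aop[OF W d1 vW] by (auto simp: U_def)
    qed
    show "Eop l v \<in> U" if "l \<le> d" "v \<in> U" for l v
      using that T_module_Eop[OF W] by (auto simp: U_def Eop_apply)
  qed
  have "U \<subseteq> W" by (auto simp: U_def)
  moreover have "U \<noteq> {0}" using nz by (auto simp: U_def)
  ultimately have "U = W" using irr TU by blast
  then show ?thesis by (auto simp: U_def)
qed

lemma exists_irreducible_submodule:
  assumes U: "T_module d R u0 U" and nz: "\<not> U \<subseteq> {0}"
  shows "\<exists>W. irreducible_T_module d R u0 W \<and> W \<subseteq> U"
proof -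
  define P where "P V \<longleftrightarrow> T_module d R u0 V \<and> V \<subseteq> U \<and> \<not> V \<subseteq> {0}" for V
  have "P U" using U nz by (simp add: P_def)
  then obtain W where PW: "P W" and min: "\<And>V. P V \<Longrightarrow> fun_space.dim W \<le> fun_space.dim V"
    using ex_has_least_nat[of P U "fun_space.dim"] by blast
  have TW: "T_module d R u0 W" and "W \<subseteq> U" "\<not> W \<subseteq> {0}" using PW by (auto simp: P_def)
  have "W' = {0} \<or> W' = W" if W': "T_module d R u0 W'" "W' \<subseteq> W" for W'
  proof (cases "W' \<subseteq> {0}")
    case True
    then show ?thesis using W' T_module_subspace fun_space.subspace_0 by blast
  next
    case False
    then have "fun_space.dim W \<le> fun_space.dim W'" using W' \<open>W \<subseteq> U\<close> by (intro min) (auto simp: P_def)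
    then show ?thesis
      using fin_fun_space.subspace_dim_equal[of W' W] W' T_module_subspace[OF TW] T_module_subspace by blast
  qed
  then have "irreducible_T_module d R u0 W"
    using TW \<open>\<not> W \<subseteq> {0}\<close> by (auto simp: irreducible_T_module_def)
  then show ?thesis using \<open>W \<subseteq> U\<close> by blast
qed

lemma T_module_orth_split:
  assumes U: "T_module d R u0 U" and W: "T_module d R u0 W" "W \<subseteq> U"
  shows "U = {x + y |x y. x \<in> W \<and> y \<in> U \<inter> orth_compl W}"
proof
  show "U \<subseteq> {x + y |x y. x \<in> W \<and> y \<in> U \<inter> orth_compl W}"
  proof
    fix v assume v: "v \<in> U"
    obtain w u where wu: "w \<in> W" "u \<in> orth_compl W" "v = w + u"
      using orth_compl_decomp[OF T_module_subspace[OF W(1)], of v] by blast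
    then have "u = v - w" by simp
    then have "u \<in> U" using v wu(1) W(2) T_module_subspace[OF U] fun_space.subspace_diff by blast
    then show "v \<in> {x + y |x y. x \<in> W \<and> y \<in> U \<inter> orth_compl W}" using wu by blast
  qed
  show "{x + y |x y. x \<in> W \<and> y \<in> U \<inter> orth_compl W} \<subseteq> U"
    using W(2) T_module_subspace[OF U] fun_space.subspace_add by blast
qed

definition layers :: "('a \<Rightarrow> complex) set \<Rightarrow> nat set" where
  "layers W = {i. i \<le> d \<and> Estar_img R u0 i W \<noteq> {0}}"

lemma Estar_img_eq: "Estar_img R u0 i W = Eop i ` W" by (simp add: Estar_img_def)

lemma in_layers_iff: "0 \<in> W \<Longrightarrow> i \<in> layers W \<longleftrightarrow> i \<le> d \<and> (\<exists>w\<in>W. Eop i w \<noteq> 0)"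
  by (auto simp: layers_def Estar_img_eq) (metis cmat_apply.zero image_eqI)

lemma Eop_nonzero_imp: "i \<le> d \<Longrightarrow> Eop i w \<noteq> 0 \<Longrightarrow> \<exists>y. dist u0 y = i \<and> w y \<noteq> 0"
  by (auto simp: Eop_apply fun_eq_iff split: if_splits)

context
  fixes W assumes irr: "irreducible_T_module d R u0 W"
begin

lemma irr_T_module: "T_module d R u0 W" using irr by (simp add: irreducible_T_module_def)
lemma irr_nonzero: "W \<noteq> {0}" using irr by (simp add: irreducible_T_module_def)
lemma irr_minimal: "\<forall>W'. T_module d R u0 W' \<and> W' \<subseteq> W \<longrightarrow> W' = {0} \<or> W' = W"
  using irr by (simp add: irreducible_T_module_def)
lemma irr_subspace: "fun_space.subspace W" using irr_T_module by (rule T_module_subspace)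
lemma irr_zero: "0 \<in> W" using irr_subspace fun_space.subspace_0 by blast
lemmas in_layers = in_layers_iff[OF irr_zero]

lemma layers_nonempty: "\<exists>i. i \<in> layers W"
proof -
  obtain w where w: "w \<in> W" "w \<noteq> 0" using irr_nonzero irr_subspace fun_space.subspace_0 by blast
  then obtain x where x: "w x \<noteq> 0" by (auto simp: fun_eq_iff)
  have "Eop (dist u0 x) w x = w x" using dist_le_diameter by (simp add: Eop_apply)
  then have "Eop (dist u0 x) w \<noteq> 0" using x by auto
  then show ?thesis using w dist_le_diameter in_layers by blast
qed

abbreviation "rho \<equiv> endpoint d R u0 W"

lemma endpoint_in_layers: "rho \<in> layers W" and endpoint_le: "i \<in> layers W \<Longrightarrow> rho \<le> i"
proof -
  obtain i where i: "i \<in> layers W" using layers_nonempty by blast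
  have eq: "rho = (LEAST i. i \<in> layers W)" by (simp add: endpoint_def layers_def)
  show "rho \<in> layers W" unfolding eq using i by (rule LeastI)
  show "i \<in> layers W \<Longrightarrow> rho \<le> i" for i unfolding eq by (rule Least_le)
qed

lemma layers_le_diameter: "i \<in> layers W \<Longrightarrow> i \<le> d" by (simp add: layers_def)

lemma raising_map_nonzero:
  assumes ri: "rho \<le> i" and i1: "i + 1 \<in> layers W"
  shows "\<exists>w\<in>W. Eop (i + 1) (Aop 1 (Eop i w)) \<noteq> 0"
proof (rule ccontr)
  assume "\<not> ?thesis"
  then have z: "\<forall>w\<in>W. Eop (i + 1) (Aop 1 (Eop i w)) = 0" by blast
  have id: "i + 1 \<le> d" using i1 layers_le_diameter by blast
  obtain w where w: "w \<in> W" "Eop rho w \<noteq> 0" using endpoint_in_layers in_layers by blast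
  have rd: "rho \<le> d" using endpoint_in_layers layers_le_diameter by blast
  have "\<forall>w\<in>W. \<forall>y. i < dist u0 y \<longrightarrow> w y = 0"
  proof (rule irreducible_vanishes_above[OF irr_T_module irr_minimal id z])
    show "\<exists>w\<in>W. w \<noteq> 0 \<and> (\<forall>y. i < dist u0 y \<longrightarrow> w y = 0)"
      using T_module_Eop[OF irr_T_module rd w(1)] w(2) ri rd by (intro bexI[of _ "Eop rho w"]) (auto simp: Eop_apply)
  qed
  moreover obtain w where w: "w \<in> W" "Eop (i + 1) w \<noteq> 0" using i1 in_layers by blast
  then obtain y where "dist u0 y = i + 1" "w y \<noteq> 0" using Eop_nonzero_imp id by blast
  ultimately show False using w by force
qed

lemma layers_pred:
  assumes i: "i \<in> layers W" and ri: "rho < i"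
  shows "i - 1 \<in> layers W"
proof (rule ccontr)
  assume "i - 1 \<notin> layers W"
  moreover have "i - 1 \<le> d" using i layers_le_diameter by fastforce
  ultimately have "\<forall>w\<in>W. Eop (i - 1) w = 0" using in_layers[of "i - 1"] by auto
  moreover have "rho \<le> i - 1" "i - 1 + 1 = i" using ri by auto
  ultimately show False
    using raising_map_nonzero[of "i - 1"] i by (auto simp: cmat_apply.zero)
qed

abbreviation "delta \<equiv> module_diameter d R u0 W"

lemma in_layers_iff_interval: "i \<in> layers W \<longleftrightarrow> rho \<le> i \<and> i \<le> rho + delta"
proof -
  have fin: "finite (layers W)" by (rule finite_subset[of _ "{..d}"]) (auto simp: layers_def)
  define M where "M = Max (layers W)"
  have M: "M \<in> layers W" using fin layers_nonempty unfolding M_def by (metis Max_in empty_iff)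
  have down: "M - k \<ge> rho \<Longrightarrow> M - k \<in> layers W" for k
  proof (induction k)
    case 0 then show ?case using M by simp
  next
    case (Suc k)
    have Mk: "M - k \<in> layers W" using Suc by simp
    show ?case
    proof (cases "k < M")
      case True
      then have "rho < M - k" using Suc.prems by simp
      with Mk have "M - k - 1 \<in> layers W" by (rule layers_pred)
      then show ?thesis by simp
    next
      case False
      then show ?thesis using Mk by simp
    qed
  qed
  have eq: "layers W = {rho..M}"
  proof
    show "layers W \<subseteq> {rho..M}" using endpoint_le fin M_def by auto
    show "{rho..M} \<subseteq> layers W"
    proof
      fix i assume "i \<in> {rho..M}"
      then have "M - (M - i) \<ge> rho" "M - (M - i) = i" by auto
      then show "i \<in> layers W" using down[of "M - i"] by simp
    qed
  qed
  have "delta = M - rho"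
    unfolding module_diameter_def using eq by (simp add: layers_def[symmetric])
  then show ?thesis using eq endpoint_le[OF M] by auto
qed

lemma endpoint_diameter_le: "rho + delta \<le> d"
  using in_layers_iff_interval[of "rho + delta"] layers_le_diameter by auto

end

text \<open>For thin irreducible \<open>W\<close> and \<open>E\<^sup>*\<^sub>\<rho> w\<^sub>0 \<noteq> 0\<close>, \<open>std_vec k\<close> below is the
  vector \<open>v\<^sub>k\<close> of the standard basis of \<open>W\<close>.\<close>

primrec raise_seq :: "('a \<Rightarrow> complex) \<Rightarrow> nat \<Rightarrow> nat \<Rightarrow> ('a \<Rightarrow> complex)" where
  "raise_seq u b 0 = u"
| "raise_seq u b (Suc k) = Eop (b + Suc k) (Aop 1 (raise_seq u b k))"

context
  fixes W assumes irr: "irreducible_T_module d R u0 W" and thin: "thin_module d R u0 W"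
begin

lemma thin_Eop_multiple:
  assumes i: "i \<le> d" and u: "u \<in> W" "Eop i u = u" "u \<noteq> 0" and w: "w \<in> W"
  shows "\<exists>a. Eop i w = fscale a u"
proof (rule multiple_of_nonzero_in_dim_le_1)
  show "fun_space.subspace (Eop i ` W)" by (rule cmat_apply.subspace_image[OF irr_subspace[OF irr]])
  show "fun_space.dim (Eop i ` W) \<le> 1" using thin i by (simp add: thin_module_def Estar_img_eq)
  show "u \<in> Eop i ` W" using u by (metis image_eqI)
  show "u \<noteq> 0" by (rule u(3))
  show "Eop i w \<in> Eop i ` W" using w by simp
qed

lemma dim_Eop_thin:
  assumes j: "j \<le> d"
  shows "fun_space.dim (Eop j ` W) = (if j \<in> layers W then 1 else 0)"
proof (cases "j \<in> layers W")
  case True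
  then obtain w where "w \<in> W" "Eop j w \<noteq> 0" using in_layers[OF irr] by blast
  then have "fun_space.dim (Eop j ` W) \<noteq> 0" by (auto simp only: fin_fun_space.dim_eq_0)
  moreover have "fun_space.dim (Eop j ` W) \<le> 1" using thin j by (simp add: thin_module_def Estar_img_eq)
  ultimately have "fun_space.dim (Eop j ` W) = 1" by linarith
  with True show ?thesis by simp
next
  case False
  then have "Eop j ` W \<subseteq> {0}" using in_layers[OF irr] j by auto
  then show ?thesis using False by simp
qed

context
  fixes w0 assumes w0: "w0 \<in> W" "Eop (rho W) w0 \<noteq> 0"
begin

abbreviation "std_vec k \<equiv> raise_seq (Eop (rho W) w0) (rho W) k"

lemma std_vec_props: "k \<le> delta W \<Longrightarrow> std_vec k \<in> W \<and> Eop (rho W + k) (std_vec k) = std_vec k \<and> std_vec k \<noteq> 0"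
proof (induction k)
  case 0
  have rd: "rho W \<le> d" using endpoint_in_layers[OF irr] layers_le_diameter[OF irr] by blast
  have c0: "std_vec 0 = Eop (rho W) w0" by simp
  have e0: "Eop (rho W + 0) (std_vec 0) = std_vec 0" using rd by (simp add: Eop_Eop)
  show ?case using e0 T_module_Eop[OF irr_T_module[OF irr] rd w0(1)] w0(2) by (simp only: c0) blast
next
  case (Suc k)
  have IH: "std_vec k \<in> W" "Eop (rho W + k) (std_vec k) = std_vec k" "std_vec k \<noteq> 0" using Suc by auto
  have td: "rho W + delta W \<le> d" by (rule endpoint_diameter_le[OF irr])
  have d1: "rho W + Suc k \<le> d" "1 \<le> d" using Suc.prems td by auto
  have dk: "rho W + k \<le> d" using d1 by simp
  have mem: "std_vec (Suc k) \<in> W"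
    using T_module_Eop[OF irr_T_module[OF irr] d1(1)] T_module_Aop[OF irr_T_module[OF irr] d1(2) IH(1)] by simp
  have idem: "Eop (rho W + Suc k) (std_vec (Suc k)) = std_vec (Suc k)"
    using d1 by (simp add: Eop_Eop)
  have "rho W + k + 1 \<in> layers W"
    using in_layers_iff_interval[OF irr] Suc.prems by auto
  then obtain w where w: "w \<in> W" "Eop (rho W + k + 1) (Aop 1 (Eop (rho W + k) w)) \<noteq> 0"
    using raising_map_nonzero[OF irr, of "rho W + k"] by auto
  obtain a where a: "Eop (rho W + k) w = fscale a (std_vec k)"
    using thin_Eop_multiple[OF dk IH w(1)] by blast
  have "Eop (rho W + k + 1) (Aop 1 (Eop (rho W + k) w)) = fscale a (std_vec (Suc k))"
    unfolding a by (simp add: cmat_apply.scale)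
  then have "std_vec (Suc k) \<noteq> 0" using w(2) by (auto simp: fscale_def)
  then show ?case using mem idem by (intro conjI)
qed

lemma c_prod_Eop_Aop_std_vec:
  assumes am: "a + m \<le> delta W"
  shows "fscale (complex_of_real (c_prod m)) (Eop (rho W + a + m) (Aop m (std_vec a))) = std_vec (a + m)"
  using am
proof (induction m)
  case 0
  have "Eop (rho W + a) (std_vec a) = std_vec a" using std_vec_props[of a] 0 by simp
  then show ?case by (simp add: Aop_0 c_prod_def fscale_def)
next
  case (Suc m)
  have td: "rho W + delta W \<le> d" by (rule endpoint_diameter_le[OF irr])
  define j where "j = rho W + a"
  have jr: "j \<le> j + m" and rd: "j + m + 1 \<le> d" using Suc.prems td j_def by auto
  have v: "Eop j (std_vec a) = std_vec a" using std_vec_props[of a] Suc.prems j_def by simp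
  have std_vec: "Eop (j + m + 1) (Aop 1 (Eop (j + m) (Aop (j + m - j) (Eop j (std_vec a)))))
       = fscale (of_nat (c_num R (j + m + 1 - j))) (Eop (j + m + 1) (Aop (j + m + 1 - j) (Eop j (std_vec a))))"
    by (rule Eop_A1_Eop_Aop[OF jr rd])
  then have ch': "Eop (j + m + 1) (Aop 1 (Eop (j + m) (Aop m (std_vec a))))
       = fscale (of_nat (c_num R (Suc m))) (Eop (j + m + 1) (Aop (Suc m) (std_vec a)))"
    unfolding v by simp
  have IH: "fscale (complex_of_real (c_prod m)) (Eop (j + m) (Aop m (std_vec a))) = std_vec (a + m)"
    using Suc j_def by simp
  have "fscale (complex_of_real (c_prod (Suc m))) (Eop (rho W + a + Suc m) (Aop (Suc m) (std_vec a)))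
      = fscale (complex_of_real (c_prod m)) (fscale (of_nat (c_num R (Suc m))) (Eop (j + m + 1) (Aop (Suc m) (std_vec a))))"
    unfolding c_prod_Suc j_def by (simp add: fscale_def mult.assoc)
  also have "\<dots> = fscale (complex_of_real (c_prod m)) (Eop (j + m + 1) (Aop 1 (Eop (j + m) (Aop m (std_vec a)))))"
    unfolding ch' ..
  also have "\<dots> = Eop (j + m + 1) (Aop 1 (fscale (complex_of_real (c_prod m)) (Eop (j + m) (Aop m (std_vec a)))))"
    by (simp add: cmat_apply.scale)
  also have "\<dots> = Eop (j + m + 1) (Aop 1 (std_vec (a + m)))" by (simp only: IH)
  also have "\<dots> = std_vec (a + Suc m)" by (simp add: j_def add.assoc)
  finally show ?case .
qed

end

end

end

section \<open>The shells \<open>X\<^sub>r\<^sub>1, \<dots>, X\<^sub>r\<^sub>p\<close>\<close>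

lemma c_matrix_kernel_trivial:
  assumes det: "det (c_matrix R p e r) \<noteq> 0"
    and eq: "\<And>i. i < p \<Longrightarrow> (\<Sum>h<p. (\<Prod>s = 1..h. real (c_num R (r (i + 1) - e + p - s))) * \<beta> h) = 0"
  shows "\<forall>h<p. \<beta> h = 0"
proof -
  define M where "M = c_matrix R p e r"
  have M: "M \<in> carrier_mat p p" by (simp add: M_def c_matrix_def)
  define v where "v = vec p \<beta>"
  have v: "v \<in> carrier_vec p" by (simp add: v_def)
  have Mv: "M *\<^sub>v v = 0\<^sub>v p"
  proof (rule eq_vecI)
    fix i assume i: "i < dim_vec (0\<^sub>v p :: real vec)"
    then have i: "i < p" by simp
    have "(M *\<^sub>v v) $ i = (\<Sum>h\<in>{0..<p}. M $$ (i, h) * v $ h)"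
      using i M v by (simp add: scalar_prod_def row_def)
    also have "\<dots> = (\<Sum>h<p. (\<Prod>s = 1..h. real (c_num R (r (i + 1) - e + p - s))) * \<beta> h)"
      using i by (intro sum.cong) (auto simp: M_def c_matrix_def v_def)
    also have "\<dots> = 0" using eq i by simp
    finally show "(M *\<^sub>v v) $ i = 0\<^sub>v p $ i" using i by simp
  qed (use M in simp)
  have "v = 0\<^sub>v p"
  proof (rule ccontr)
    assume "v \<noteq> 0\<^sub>v p"
    then have "det M = 0" using det_0_iff_vec_prod_zero[OF M] v Mv by blast
    then show False using det M_def by simp
  qed
  then show ?thesis by (auto simp: v_def vec_eq_iff)
qed

lemma prod_split_top:
  fixes f :: "nat \<Rightarrow> 'b::comm_monoid_mult"
  shows "h < N \<Longrightarrow> (\<Prod>s = 1..h. f (N - s)) * (\<Prod>s = 1..N - 1 - h. f s) = (\<Prod>s = 1..N - 1. f s)"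
proof (induction h)
  case 0 then show ?case by simp
next
  case (Suc h)
  have a: "(\<Prod>s = 1..Suc h. f (N - s)) = (\<Prod>s = 1..h. f (N - s)) * f (N - Suc h)"
    by (simp add: prod.atLeast1_atMost_eq prod.nat_ivl_Suc' mult.commute)
  have b: "(\<Prod>s = 1..N - 1 - h. f s) = (\<Prod>s = 1..N - 1 - Suc h. f s) * f (N - Suc h)"
  proof -
    have "N - 1 - h = Suc (N - 1 - Suc h)" using Suc.prems by simp
    moreover have "N - Suc h = Suc (N - 1 - Suc h)" using Suc.prems by simp
    ultimately show ?thesis by (simp add: prod.nat_ivl_Suc')
  qed
  show ?case using Suc a b by (simp add: ac_simps)
qed

lemma sum_window_shift:
  fixes q p e j0 :: nat and f :: "nat \<Rightarrow> 'b::comm_monoid_add"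
  assumes "q + p = e + 1" "q \<le> j0"
  shows "(\<Sum>j\<in>{j0..e}. f j) = (\<Sum>h<p. if j0 \<le> q + h then f (q + h) else 0)"
proof -
  have "(\<Sum>j\<in>{j0..e}. f j) = (\<Sum>j\<in>{0 + q..<p + q}. if j0 \<le> j then f j else 0)"
    using assms by (intro sum.mono_neutral_cong_left) auto
  also have "\<dots> = (\<Sum>h\<in>{0..<p}. if j0 \<le> h + q then f (h + q) else 0)"
    by (rule sum.shift_bounds_nat_ivl)
  also have "\<dots> = (\<Sum>h<p. if j0 \<le> q + h then f (q + h) else 0)"
    unfolding lessThan_atLeast0 by (intro sum.cong refl) (simp add: add.commute)
  finally show ?thesis .
qed

locale pscheme_shells = pscheme_vertex d R u0 for d :: nat and R :: "nat \<Rightarrow> ('a::finite \<times> 'a) set" and u0 :: 'a +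
  fixes e p :: nat and r :: "nat \<Rightarrow> nat"
  assumes p_pos: "1 \<le> p" and e_ge: "p - 1 \<le> e" and e_le: "e \<le> r 1"
    and r_mono: "\<forall>i. 1 \<le> i \<and> i < p \<longrightarrow> r i < r (i + 1)" and r_le: "r p \<le> d"
begin

lemma r_strict_mono: "1 \<le> s \<Longrightarrow> s < t \<Longrightarrow> t \<le> p \<Longrightarrow> r s < r t"
proof (induction t)
  case 0 then show ?case by simp
next
  case (Suc t)
  show ?case
  proof (cases "s < t")
    case True
    then have "r s < r t" using Suc by simp
    also have "r t < r (t + 1)" using r_mono Suc.prems True by auto
    finally show ?thesis by simp
  next
    case False
    then have "s = t" using Suc.prems by simp
    then show ?thesis using r_mono Suc.prems by auto
  qed
qed

lemma r_mono_le: "1 \<le> s \<Longrightarrow> s \<le> t \<Longrightarrow> t \<le> p \<Longrightarrow> r s \<le> r t"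
  using r_strict_mono[of s t] by (cases "s = t") auto

lemma r_bounds: "t \<in> {1..p} \<Longrightarrow> e \<le> r t \<and> r t \<le> r p \<and> r t \<le> d"
  using r_mono_le[of 1 t] r_mono_le[of t p] e_le r_le by auto

lemma r_inj: "s \<in> {1..p} \<Longrightarrow> t \<in> {1..p} \<Longrightarrow> r s = r t \<Longrightarrow> s = t"
  using r_strict_mono[of s t] r_strict_mono[of t s] by (cases s t rule: linorder_cases) auto

lemma e_le_d: "e \<le> d" using r_bounds[of p] p_pos by auto
lemma e_le_r_p: "e \<le> r p" using r_bounds[of p] p_pos by auto

definition Psi :: "('a \<Rightarrow> complex) \<Rightarrow> ('a \<Rightarrow> complex)" where
  "Psi v = (\<Sum>t\<in>{1..p}. \<Sum>j\<in>{0..e}. Eop (r t) (Aop (r t - j) (Eop j v)))"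

lemma module_hom_Psi: "module_hom fscale fscale Psi"
  by unfold_locales
     (simp_all only: Psi_def cmat_apply.add cmat_apply.scale sum.distrib fun_space.scale_sum_right)

sublocale Psi: module_hom fscale fscale Psi
  by (rule module_hom_Psi)

lemma T_module_Psi:
  assumes U: "T_module d R u0 U" and v: "v \<in> U"
  shows "Psi v \<in> U"
proof -
  have "Eop (r t) (Aop (r t - j) (Eop j v)) \<in> U" if "t \<in> {1..p}" "j \<in> {0..e}" for t j
  proof -
    have "r t \<le> d" "r t - j \<le> d" "j \<le> d" using r_bounds[OF that(1)] that(2) e_le_d by auto
    then show ?thesis using T_module_Eop[OF U] T_module_Aop[OF U] v by blast
  qed
  then show ?thesis
    unfolding Psi_def by (intro fun_space.subspace_sum[OF T_module_subspace[OF U]] ballI) auto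
qed

lemma Psi_Eop:
  assumes j: "j \<le> e"
  shows "Psi (Eop j v) = (\<Sum>t\<in>{1..p}. Eop (r t) (Aop (r t - j) (Eop j v)))"
proof -
  have "Psi (Eop j v) = (\<Sum>t\<in>{1..p}. \<Sum>i\<in>{0..e}. if i = j then Eop (r t) (Aop (r t - j) (Eop j v)) else 0)"
    unfolding Psi_def using j e_le_d by (intro sum.cong refl) (simp add: Eop_Eop)
  also have "\<dots> = (\<Sum>t\<in>{1..p}. Eop (r t) (Aop (r t - j) (Eop j v)))"
    using j by simp
  finally show ?thesis .
qed

lemma Psi_eq_sum_Psi_Eop: "Psi v = (\<Sum>j\<in>{0..e}. Psi (Eop j v))"
proof -
  have "(\<Sum>j\<in>{0..e}. Psi (Eop j v)) = (\<Sum>j\<in>{0..e}. \<Sum>t\<in>{1..p}. Eop (r t) (Aop (r t - j) (Eop j v)))"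
    by (intro sum.cong refl Psi_Eop) simp
  also have "\<dots> = Psi v" unfolding Psi_def by (rule sum.swap[symmetric])
  finally show ?thesis by simp
qed

lemma c_matrix_entry_eq:
  assumes t: "t \<in> {1..p}" and j: "j \<in> {e + 1 - p..e}"
  shows "(\<Prod>s = 1..j - (e + 1 - p). real (c_num R (r t - e + p - s))) = c_prod (r t - e + p - 1) / c_prod (r t - j)"
proof -
  define N where "N = r t - e + p"
  define h where "h = j - (e + 1 - p)"
  have et: "e \<le> r t" "r t \<le> d" using r_bounds[OF t] by auto
  have hN: "h < N" using j et p_pos by (auto simp: N_def h_def)
  have Nh: "N - 1 - h = r t - j" using j et p_pos e_ge by (auto simp: N_def h_def)
  have "(\<Prod>s = 1..h. real (c_num R (N - s))) * c_prod (N - 1 - h) = c_prod (N - 1)"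
    unfolding c_prod_def by (rule prod_split_top[OF hN])
  moreover have "c_prod (N - 1 - h) \<noteq> 0" using Nh et by (intro c_prod_nonzero) simp
  ultimately show ?thesis unfolding Nh[symmetric] by (simp add: N_def h_def field_simps)
qed

text \<open>By \<open>c_matrix_entry_eq\<close>, row \<open>t\<close> of \<open>c_matrix\<close> applied to
  \<open>h \<mapsto> \<gamma>(e + 1 - p + h)\<close> is \<open>c_prod (r t - e + p - 1)\<close> times the \<open>t\<close>-th equation.\<close>

lemma c_prod_system_trivial:
  assumes det: "det (c_matrix R p e r) \<noteq> 0" and j0: "e + 1 - p \<le> j0"
    and eq: "\<forall>t\<in>{1..p}. (\<Sum>j\<in>{j0..e}. \<gamma> j / c_prod (r t - j)) = 0"
  shows "\<forall>j\<in>{j0..e}. \<gamma> j = 0"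
proof -
  define q where "q = e + 1 - p"
  have qp: "q + p = e + 1" using e_ge p_pos by (simp add: q_def)
  define \<beta> where "\<beta> h = (if j0 \<le> q + h then \<gamma> (q + h) else 0)" for h
  have sumj: "(\<Sum>j\<in>{j0..e}. f j) = (\<Sum>h<p. if j0 \<le> q + h then f (q + h) else 0)" for f :: "nat \<Rightarrow> real"
    using sum_window_shift[OF qp] j0 by (simp add: q_def)
  have rows: "(\<Sum>h<p. (\<Prod>s = 1..h. real (c_num R (r (i + 1) - e + p - s))) * \<beta> h) = 0" if i: "i < p" for i
  proof -
    define t where "t = i + 1"
    have t: "t \<in> {1..p}" using i by (simp add: t_def)
    have "(\<Sum>h<p. (\<Prod>s = 1..h. real (c_num R (r t - e + p - s))) * \<beta> h)
        = (\<Sum>h<p. if j0 \<le> q + h then c_prod (r t - e + p - 1) / c_prod (r t - (q + h)) * \<gamma> (q + h) else 0)"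
    proof (intro sum.cong refl)
      fix h assume h: "h \<in> {..<p}"
      show "(\<Prod>s = 1..h. real (c_num R (r t - e + p - s))) * \<beta> h =
          (if j0 \<le> q + h then c_prod (r t - e + p - 1) / c_prod (r t - (q + h)) * \<gamma> (q + h) else 0)"
      proof (cases "j0 \<le> q + h")
        case True
        have jj: "q + h \<in> {e + 1 - p..e}" using h qp by (auto simp: q_def)
        have hh: "q + h - (e + 1 - p) = h" by (simp add: q_def)
        show ?thesis using True c_matrix_entry_eq[OF t jj] unfolding hh by (simp add: \<beta>_def)
      qed (simp add: \<beta>_def)
    qed
    also have "\<dots> = (\<Sum>j\<in>{j0..e}. c_prod (r t - e + p - 1) / c_prod (r t - j) * \<gamma> j)"
      by (rule sumj[symmetric])
    also have "\<dots> = c_prod (r t - e + p - 1) * (\<Sum>j\<in>{j0..e}. \<gamma> j / c_prod (r t - j))"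
      by (simp add: sum_distrib_left)
    also have "\<dots> = 0" using eq t by simp
    finally show ?thesis by (simp add: t_def)
  qed
  have "\<forall>h<p. \<beta> h = 0" by (rule c_matrix_kernel_trivial[OF det rows])
  then show ?thesis
  proof (intro ballI)
    fix j assume allz: "\<forall>h<p. \<beta> h = 0" and j: "j \<in> {j0..e}"
    have "j - q < p" "q + (j - q) = j" using j j0 qp by (auto simp: q_def)
    then show "\<gamma> j = 0" using allz[rule_format, of "j - q"] j by (simp add: \<beta>_def)
  qed
qed

context
  fixes W w0
  assumes irr: "irreducible_T_module d R u0 W" and thin: "thin_module d R u0 W"
    and w0: "w0 \<in> W" "Eop (rho W) w0 \<noteq> 0"
    and rho_e: "rho W \<le> e" and top: "r p \<le> rho W + delta W"
begin

lemmas std_vec_W = std_vec_props[OF irr thin w0]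

lemma r_range: "t \<in> {1..p} \<Longrightarrow> rho W \<le> r t \<and> r t - rho W \<le> delta W"
  using r_bounds[of t] rho_e top by auto

lemma Eop_std_vec: "a \<le> delta W \<Longrightarrow> j \<le> d \<Longrightarrow> Eop j (std_vec W w0 a) = (if j = rho W + a then std_vec W w0 a else 0)"
proof -
  assume a: "a \<le> delta W" and j: "j \<le> d"
  have rd: "rho W + a \<le> d" using a endpoint_diameter_le[OF irr] by simp
  have "Eop j (std_vec W w0 a) = Eop j (Eop (rho W + a) (std_vec W w0 a))" using std_vec_W[OF a] by simp
  also have "\<dots> = (if j = rho W + a then Eop (rho W + a) (std_vec W w0 a) else 0)" using j rd by (simp only: Eop_Eop)
  also have "\<dots> = (if j = rho W + a then std_vec W w0 a else 0)" using std_vec_W[OF a] by simp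
  finally show ?thesis .
qed

lemma Psi_std_vec:
  assumes a: "rho W + a \<le> e"
  shows "Psi (std_vec W w0 a) = (\<Sum>t\<in>{1..p}. fscale (1 / complex_of_real (c_prod (r t - (rho W + a)))) (std_vec W w0 (r t - rho W)))"
  unfolding Psi_def
proof (intro sum.cong refl)
  fix t assume t: "t \<in> {1..p}"
  have ad: "a \<le> delta W" using a top e_le_r_p by simp
  have "(\<Sum>j\<in>{0..e}. Eop (r t) (Aop (r t - j) (Eop j (std_vec W w0 a))))
      = (\<Sum>j\<in>{0..e}. if j = rho W + a then Eop (r t) (Aop (r t - (rho W + a)) (std_vec W w0 a)) else 0)"
  proof (intro sum.cong refl)
    fix j assume "j \<in> {0..e}"
    then have "j \<le> d" using e_le_d by simp
    then show "Eop (r t) (Aop (r t - j) (Eop j (std_vec W w0 a))) = (if j = rho W + a then Eop (r t) (Aop (r t - (rho W + a)) (std_vec W w0 a)) else 0)"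
      using Eop_std_vec[OF ad] by (simp add: cmat_apply.zero)
  qed
  also have "\<dots> = Eop (r t) (Aop (r t - (rho W + a)) (std_vec W w0 a))"
    using a by (simp add: sum.delta)
  also have "\<dots> = fscale (1 / complex_of_real (c_prod (r t - (rho W + a)))) (std_vec W w0 (r t - rho W))"
  proof -
    define m where "m = r t - (rho W + a)"
    have am: "a + m \<le> delta W" and rt: "rho W + a + m = r t" and am2: "a + m = r t - rho W"
      using r_range[OF t] r_bounds[OF t] a by (auto simp: m_def)
    have md: "m \<le> d" using r_bounds[OF t] unfolding m_def by linarith
    have g: "fscale (complex_of_real (c_prod m)) (Eop (rho W + a + m) (Aop m (std_vec W w0 a))) = std_vec W w0 (a + m)"
      by (rule c_prod_Eop_Aop_std_vec[OF irr thin w0 am])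
    have "fscale (1 / complex_of_real (c_prod m)) (std_vec W w0 (a + m)) = Eop (rho W + a + m) (Aop m (std_vec W w0 a))"
      unfolding g[symmetric] using c_prod_nonzero[OF md] by (simp add: fscale_def)
    then show ?thesis unfolding m_def[symmetric] using rt am2 by simp
  qed
  finally show "(\<Sum>j\<in>{0..e}. Eop (r t) (Aop (r t - j) (Eop j (std_vec W w0 a)))) =
    fscale (1 / complex_of_real (c_prod (r t - (rho W + a)))) (std_vec W w0 (r t - rho W))" .
qed

lemma std_vec_separating_point:
  assumes t: "t \<in> {1..p}"
  shows "\<exists>x. std_vec W w0 (r t - rho W) x \<noteq> 0 \<and> (\<forall>t'\<in>{1..p}. t' \<noteq> t \<longrightarrow> std_vec W w0 (r t' - rho W) x = 0)"
proof -
  have k: "r t - rho W \<le> delta W" and rt: "rho W + (r t - rho W) = r t" using r_range[OF t] by auto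
  have P: "std_vec W w0 (r t - rho W) \<in> W" "Eop (r t) (std_vec W w0 (r t - rho W)) = std_vec W w0 (r t - rho W)" "std_vec W w0 (r t - rho W) \<noteq> 0"
    using std_vec_W[OF k] rt by auto
  obtain x where x: "std_vec W w0 (r t - rho W) x \<noteq> 0" using P(3) by (auto simp: fun_eq_iff)
  have dx: "dist u0 x = r t"
  proof (rule ccontr)
    assume "dist u0 x \<noteq> r t"
    then have "Eop (r t) (std_vec W w0 (r t - rho W)) x = 0" using r_bounds[OF t] by (simp add: Eop_apply)
    then show False using P(2) x by simp
  qed
  have "std_vec W w0 (r t' - rho W) x = 0" if t': "t' \<in> {1..p}" "t' \<noteq> t" for t'
  proof -
    have k': "r t' - rho W \<le> delta W" and rt': "rho W + (r t' - rho W) = r t'" using r_range[OF t'(1)] by auto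
    have "std_vec W w0 (r t' - rho W) x = Eop (r t') (std_vec W w0 (r t' - rho W)) x" using std_vec_W[OF k'] rt' by simp
    also have "\<dots> = 0" using dx r_inj[OF t'(1) t] t' r_bounds[OF t'(1)] by (auto simp: Eop_apply)
    finally show ?thesis .
  qed
  then show ?thesis using x by blast
qed

lemma Psi_std_vec_dependency:
  assumes j0: "rho W \<le> j0"
    and z: "(\<Sum>j\<in>{j0..e}. fscale (b j) (Psi (std_vec W w0 (j - rho W)))) = 0"
    and t: "t \<in> {1..p}"
  shows "(\<Sum>j\<in>{j0..e}. b j / complex_of_real (c_prod (r t - j))) = 0"
proof -
  obtain x where x: "std_vec W w0 (r t - rho W) x \<noteq> 0"
      "\<forall>t'\<in>{1..p}. t' \<noteq> t \<longrightarrow> std_vec W w0 (r t' - rho W) x = 0"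
    using std_vec_separating_point[OF t] by blast
  have "0 = (\<Sum>j\<in>{j0..e}. fscale (b j) (Psi (std_vec W w0 (j - rho W)))) x" using z by simp
  also have "\<dots> = (\<Sum>j\<in>{j0..e}. b j * (1 / complex_of_real (c_prod (r t - j)) * std_vec W w0 (r t - rho W) x))"
  proof (unfold sum_fun_apply fscale_apply, intro sum.cong refl)
    fix j assume j: "j \<in> {j0..e}"
    have a: "rho W + (j - rho W) \<le> e" and ja: "rho W + (j - rho W) = j" using j j0 by auto
    have "Psi (std_vec W w0 (j - rho W)) x
        = (\<Sum>t'\<in>{1..p}. 1 / complex_of_real (c_prod (r t' - j)) * std_vec W w0 (r t' - rho W) x)"
      unfolding Psi_std_vec[OF a] ja by (simp add: sum_fun_apply fscale_apply)
    also have "\<dots> = (\<Sum>t'\<in>{1..p}. if t' = t then 1 / complex_of_real (c_prod (r t - j)) * std_vec W w0 (r t - rho W) x else 0)"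
      using x(2) by (intro sum.cong refl) auto
    also have "\<dots> = 1 / complex_of_real (c_prod (r t - j)) * std_vec W w0 (r t - rho W) x"
      using t by (simp add: sum.delta)
    finally show "b j * Psi (std_vec W w0 (j - rho W)) x
        = b j * (1 / complex_of_real (c_prod (r t - j)) * std_vec W w0 (r t - rho W) x)" by simp
  qed
  also have "\<dots> = (\<Sum>j\<in>{j0..e}. b j / complex_of_real (c_prod (r t - j))) * std_vec W w0 (r t - rho W) x"
    by (simp add: sum_distrib_right)
  finally show ?thesis using x(1) by simp
qed

lemma Psi_std_vec_independent:
  assumes det: "det (c_matrix R p e r) \<noteq> 0"
    and j0: "rho W \<le> j0" "e + 1 - p \<le> j0"
    and z: "(\<Sum>j\<in>{j0..e}. fscale (b j) (Psi (std_vec W w0 (j - rho W)))) = 0"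
  shows "\<forall>j\<in>{j0..e}. b j = 0"
proof -
  have "\<forall>t\<in>{1..p}. (\<Sum>j\<in>{j0..e}. Re (b j) / c_prod (r t - j)) = 0"
    using arg_cong[OF Psi_std_vec_dependency[OF j0(1) z], of _ Re] by (simp add: Re_sum)
  moreover have "\<forall>t\<in>{1..p}. (\<Sum>j\<in>{j0..e}. Im (b j) / c_prod (r t - j)) = 0"
    using arg_cong[OF Psi_std_vec_dependency[OF j0(1) z], of _ Im] by (simp add: Im_sum)
  ultimately have "\<forall>j\<in>{j0..e}. Re (b j) = 0 \<and> Im (b j) = 0"
    using c_prod_system_trivial[OF det j0(2), of "\<lambda>j. Re (b j)"]
      c_prod_system_trivial[OF det j0(2), of "\<lambda>j. Im (b j)"] by simp
  then show ?thesis by (simp add: complex_eq_iff)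
qed

lemma in_layers_iff_le: "j \<le> e \<Longrightarrow> j \<in> layers W \<longleftrightarrow> rho W \<le> j"
  using in_layers_iff_interval[OF irr] top e_le_r_p by auto

lemma Psi_subset_span_Psi_std_vec:
  assumes low: "e + 1 - p \<le> rho W"
  shows "Psi ` W \<subseteq> fun_space.span ((\<lambda>j. Psi (std_vec W w0 (j - rho W))) ` {rho W..e})"
proof
  fix v assume "v \<in> Psi ` W"
  then obtain w where w: "w \<in> W" "v = Psi w" by auto
  have "Psi (Eop j w) \<in> fun_space.span ((\<lambda>j. Psi (std_vec W w0 (j - rho W))) ` {rho W..e})"
    if j: "j \<in> {0..e}" for j
  proof (cases "rho W \<le> j")
    case True
    have k: "j - rho W \<le> delta W" and jj: "rho W + (j - rho W) = j" using j True top e_le_r_p by auto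
    have u: "std_vec W w0 (j - rho W) \<in> W" "Eop j (std_vec W w0 (j - rho W)) = std_vec W w0 (j - rho W)"
        "std_vec W w0 (j - rho W) \<noteq> 0"
      using std_vec_W[OF k] jj by auto
    obtain a where "Eop j w = fscale a (std_vec W w0 (j - rho W))"
      using thin_Eop_multiple[OF irr thin _ u w(1)] j e_le_d by auto
    then have "Psi (Eop j w) = fscale a (Psi (std_vec W w0 (j - rho W)))" by (simp add: Psi.scale)
    also have "\<dots> \<in> fun_space.span ((\<lambda>j. Psi (std_vec W w0 (j - rho W))) ` {rho W..e})"
      using j True by (intro fun_space.span_scale fun_space.span_base) auto
    finally show ?thesis .
  next
    case False
    then have "Eop j w = 0" using in_layers_iff_le in_layers[OF irr] j e_le_d w(1) by auto
    then show ?thesis by (simp add: fun_space.span_zero)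
  qed
  then show "v \<in> fun_space.span ((\<lambda>j. Psi (std_vec W w0 (j - rho W))) ` {rho W..e})"
    unfolding w(2) Psi_eq_sum_Psi_Eop[of w] by (intro fun_space.span_sum) auto
qed

lemma Psi_subset_span_top_std_vec:
  "Psi ` W \<subseteq> fun_space.span ((\<lambda>t. std_vec W w0 (r t - rho W)) ` {1..p})"
proof
  fix v assume "v \<in> Psi ` W"
  then obtain w where w: "w \<in> W" "v = Psi w" by auto
  have "Eop (r t) (Aop (r t - j) (Eop j w)) \<in> fun_space.span ((\<lambda>t. std_vec W w0 (r t - rho W)) ` {1..p})"
    if t: "t \<in> {1..p}" and j: "j \<in> {0..e}" for t j
  proof -
    have k: "r t - rho W \<le> delta W" and rt: "rho W + (r t - rho W) = r t" using r_range[OF t] by auto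
    have u: "std_vec W w0 (r t - rho W) \<in> W" "Eop (r t) (std_vec W w0 (r t - rho W)) = std_vec W w0 (r t - rho W)"
        "std_vec W w0 (r t - rho W) \<noteq> 0"
      using std_vec_W[OF k] rt by auto
    have bd: "r t \<le> d" "r t - j \<le> d" "j \<le> d" using r_bounds[OF t] j e_le_d by auto
    have "Aop (r t - j) (Eop j w) \<in> W"
      using T_module_Aop[OF irr_T_module[OF irr] bd(2) T_module_Eop[OF irr_T_module[OF irr] bd(3) w(1)]] .
    then obtain a where a: "Eop (r t) (Aop (r t - j) (Eop j w)) = fscale a (std_vec W w0 (r t - rho W))"
      using thin_Eop_multiple[OF irr thin bd(1) u] by blast
    show ?thesis unfolding a using t by (intro fun_space.span_scale fun_space.span_base) auto
  qed
  then show "v \<in> fun_space.span ((\<lambda>t. std_vec W w0 (r t - rho W)) ` {1..p})"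
    unfolding w(2) Psi_def by (intro fun_space.span_sum) auto
qed

text \<open>Both sides equal the number of \<open>j \<in> {max \<rho> (e + 1 - p)..e}\<close>: the vectors
  \<open>Psi v\<^sub>j\<^sub>-\<^sub>\<rho>\<close> of these indices are independent, and they span the range when
  \<open>\<rho> \<ge> e + 1 - p\<close>; otherwise the range lies in the span of the \<open>p\<close> vectors
  \<open>v\<^sub>r\<^sub>t\<^sub>-\<^sub>\<rho>\<close>.\<close>

lemma dim_Psi_thin:
  assumes det: "det (c_matrix R p e r) \<noteq> 0"
  shows "fun_space.dim (Psi ` W) = (\<Sum>j\<in>{e + 1 - p..e}. fun_space.dim (Eop j ` W))"
proof -
  define j0 where "j0 = max (rho W) (e + 1 - p)"
  have j0: "rho W \<le> j0" "e + 1 - p \<le> j0" by (auto simp: j0_def)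
  have "(\<Sum>j\<in>{e + 1 - p..e}. fun_space.dim (Eop j ` W)) = (\<Sum>j\<in>{e + 1 - p..e}. if rho W \<le> j then 1 else 0)"
    using dim_Eop_thin[OF irr thin] in_layers_iff_le e_le_d by (intro sum.cong) auto
  also have "\<dots> = card {j0..e}"
    by (subst sum.mono_neutral_cong_right[of _ "{j0..e}" _ "\<lambda>_. 1"]) (auto simp: j0_def)
  finally have rhs: "(\<Sum>j\<in>{e + 1 - p..e}. fun_space.dim (Eop j ` W)) = card {j0..e}" .
  define f where "f j = Psi (std_vec W w0 (j - rho W))" for j
  have fam: "fun_space.independent (f ` {j0..e}) \<and> card (f ` {j0..e}) = card {j0..e}"
    using Psi_std_vec_independent[OF det j0] by (intro independent_family_image) (auto simp: f_def)
  have "f ` {j0..e} \<subseteq> Psi ` W"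
    using std_vec_W[of "_ - rho W"] top e_le_r_p by (auto simp: f_def)
  then have "card {j0..e} \<le> fun_space.dim (Psi ` W)"
    using fin_fun_space.independent_card_le_dim fam by metis
  moreover have "fun_space.dim (Psi ` W) \<le> card {j0..e}"
  proof (cases "e + 1 - p \<le> rho W")
    case True
    then have "j0 = rho W" by (simp add: j0_def)
    then show ?thesis
      using fun_space.dim_le_card[OF Psi_subset_span_Psi_std_vec[OF True]] card_image_le[of "{j0..e}" f]
      by (simp add: f_def)
  next
    case False
    have "fun_space.dim (Psi ` W) \<le> card ((\<lambda>t. std_vec W w0 (r t - rho W)) ` {1..p})"
      by (rule fun_space.dim_le_card[OF Psi_subset_span_top_std_vec]) simp
    also have "\<dots> \<le> card {1..p}" by (rule card_image_le) simp
    finally show ?thesis using False e_ge p_pos by (simp add: j0_def)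
  qed
  ultimately show ?thesis using rhs by simp
qed

end

lemma dim_Psi_irreducible:
  assumes irr: "irreducible_T_module d R u0 W"
    and thin_top: "rho W \<le> e \<Longrightarrow> thin_module d R u0 W \<and> r p \<le> rho W + delta W"
    and det: "det (c_matrix R p e r) \<noteq> 0"
  shows "fun_space.dim (Psi ` W) = (\<Sum>j\<in>{e + 1 - p..e}. fun_space.dim (Eop j ` W))"
proof (cases "rho W \<le> e")
  case True
  obtain w0 where "w0 \<in> W" "Eop (rho W) w0 \<noteq> 0"
    using endpoint_in_layers[OF irr] in_layers[OF irr] by blast
  then show ?thesis using dim_Psi_thin[OF irr _ _ _ True _ det] thin_top True by blast
next
  case False
  have Eop_0: "Eop j w = 0" if "j \<le> e" "w \<in> W" for j w
    using endpoint_le[OF irr, of j] in_layers[OF irr, of j] False that e_le_d by force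
  then have "fun_space.dim (Psi ` W) = 0" by (auto simp: Psi_def)
  moreover have "fun_space.dim (Eop j ` W) = 0" if "j \<in> {e + 1 - p..e}" for j
    using Eop_0 that by auto
  ultimately show ?thesis by (simp del: fin_fun_space.dim_eq_0)
qed

lemma dim_Psi_T_module:
  assumes modules: "\<forall>W. irreducible_T_module d R u0 W \<and> endpoint d R u0 W \<le> e \<longrightarrow>
        thin_module d R u0 W \<and> r p \<le> endpoint d R u0 W + module_diameter d R u0 W"
    and det: "det (c_matrix R p e r) \<noteq> 0"
  shows "T_module d R u0 U \<Longrightarrow> fun_space.dim (Psi ` U) = (\<Sum>j\<in>{e + 1 - p..e}. fun_space.dim (Eop j ` U))"
proof (induction "fun_space.dim U" arbitrary: U rule: less_induct)
  case less
  show ?case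
  proof (cases "U \<subseteq> {0}")
    case True
    then have "fun_space.dim (Psi ` U) = 0" "\<And>j. fun_space.dim (Eop j ` U) = 0" by auto
    then show ?thesis by (simp only: sum.neutral_const)
  next
    case False
    obtain W where irr: "irreducible_T_module d R u0 W" and WU: "W \<subseteq> U"
      using exists_irreducible_submodule[OF less.prems False] by blast
    have TW: "T_module d R u0 W" by (rule irr_T_module[OF irr])
    define U' where "U' = U \<inter> orth_compl W"
    have TU': "T_module d R u0 U'"
      unfolding U'_def by (rule T_module_Int[OF less.prems T_module_orth_compl[OF TW]])
    have split: "U = {x + y |x y. x \<in> W \<and> y \<in> U'}"
      unfolding U'_def by (rule T_module_orth_split[OF less.prems TW WU])
    have disj: "W \<inter> U' \<subseteq> {0}" using Int_orth_compl_subset by (auto simp: U'_def)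
    note direct_sum = dim_image_direct_sum[OF _ T_module_subspace[OF TW] T_module_subspace[OF TU'] disj,
        folded split]
    have "fun_space.dim U = fun_space.dim W + fun_space.dim U'"
      using direct_sum[OF fun_space.module_hom_id[unfolded linear_iff_module_hom]] by simp
    moreover have "fun_space.dim W \<noteq> 0" using irr_nonzero[OF irr] irr_zero[OF irr] by auto
    ultimately have "fun_space.dim U' < fun_space.dim U" by linarith
    then have IH: "fun_space.dim (Psi ` U') = (\<Sum>j\<in>{e + 1 - p..e}. fun_space.dim (Eop j ` U'))"
      using less.hyps TU' by blast
    have "fun_space.dim (Psi ` U) = fun_space.dim (Psi ` W) + fun_space.dim (Psi ` U')"
      using T_module_Psi[OF TW] T_module_Psi[OF TU'] by (intro direct_sum[OF module_hom_Psi]) auto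
    moreover have "fun_space.dim (Eop j ` U) = fun_space.dim (Eop j ` W) + fun_space.dim (Eop j ` U')"
      if "j \<in> {e + 1 - p..e}" for j
      using T_module_Eop[OF TW] T_module_Eop[OF TU'] that e_le_d
      by (intro direct_sum[OF module_hom_cmat_apply]) auto
    moreover have "fun_space.dim (Psi ` W) = (\<Sum>j\<in>{e + 1 - p..e}. fun_space.dim (Eop j ` W))"
      using dim_Psi_irreducible[OF irr _ det] modules irr by blast
    ultimately show ?thesis using IH by (simp add: sum.distrib)
  qed
qed

definition shell_union :: "'a set" where
  "shell_union = (\<Union>i\<in>{1..p}. shell R u0 (r i))"

lemma Psi_unit_fun_apply:
  assumes z: "dist u0 z \<le> e"
  shows "Psi (unit_fun z) x = (\<Sum>t\<in>{1..p}. if dist u0 x = r t \<and> dist x z = r t - dist u0 z then 1 else 0)"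
proof -
  have "Psi (unit_fun z) = (\<Sum>t\<in>{1..p}. Eop (r t) (Aop (r t - dist u0 z) (unit_fun z)))"
    using Psi_Eop[OF z, of "unit_fun z"] e_le_d z by (simp add: Eop_unit_fun)
  then have "Psi (unit_fun z) x = (\<Sum>t\<in>{1..p}. Eop (r t) (Aop (r t - dist u0 z) (unit_fun z)) x)"
    by (simp add: sum_fun_apply)
  also have "\<dots> = (\<Sum>t\<in>{1..p}. if dist u0 x = r t \<and> dist x z = r t - dist u0 z then 1 else 0)"
  proof (intro sum.cong refl Eop_Aop_unit_fun)
    fix t assume "t \<in> {1..p}"
    then show "r t \<le> d" "r t - dist u0 z \<le> d" using r_bounds[of t] by auto
  qed
  finally show ?thesis .
qed

lemma Psi_unit_fun:
  assumes z: "dist u0 z \<le> e"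
  shows "Psi (unit_fun z) = complexify (restr shell_union (fz d R u0 (dist u0 z) z))"
proof
  fix x
  show "Psi (unit_fun z) x = complexify (restr shell_union (fz d R u0 (dist u0 z) z)) x"
  proof (cases "x \<in> shell_union")
    case True
    then obtain t0 where t0: "t0 \<in> {1..p}" "dist u0 x = r t0"
      using r_bounds in_R_iff_dist by (auto simp: shell_union_def shell_def)
    have "Psi (unit_fun z) x = (\<Sum>t\<in>{1..p}. if t = t0 then (if dist x z = r t0 - dist u0 z then 1 else 0) else 0)"
      unfolding Psi_unit_fun_apply[OF z] using r_inj t0 by (intro sum.cong refl) auto
    also have "\<dots> = (if dist x z = r t0 - dist u0 z then 1 else 0)" using t0(1) by simp
    also have "\<dots> = complexify (restr shell_union (fz d R u0 (dist u0 z) z)) x"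
    proof -
      have "dist u0 z \<le> dist u0 x" using z t0(2) r_bounds[OF t0(1)] by simp
      then show ?thesis
        using True t0(2) fz_apply[of "dist u0 z" z x] dist_le_diameter
        by (simp add: complexify_def restr_def)
    qed
    finally show ?thesis .
  next
    case False
    then have "dist u0 x \<noteq> r t" if "t \<in> {1..p}" for t
      using that in_R_dist[of u0 x] by (auto simp: shell_union_def shell_def)
    then have "Psi (unit_fun z) x = 0"
      unfolding Psi_unit_fun_apply[OF z] by (intro sum.neutral) auto
    then show ?thesis using False by (simp add: complexify_def restr_def)
  qed
qed

lemma Psi_unit_fun_far: "e < dist u0 z \<Longrightarrow> Psi (unit_fun z) = 0"
  unfolding Psi_def using e_le_d by (intro sum.neutral ballI) (simp add: Eop_unit_fun)

interpretation restr: module_hom fscale fscale "restr S" for S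
  by unfold_locales (auto simp: restr_def fscale_def fun_eq_iff)

definition hom_gens :: "('a \<Rightarrow> real) set" where
  "hom_gens = (\<Union>j\<in>{0..e}. restr shell_union ` fz d R u0 j ` shell R u0 j)"

lemma span_complexify_hom_gens: "fun_space.span (complexify ` hom_gens) = Psi ` UNIV"
proof
  have sub: "fun_space.subspace (Psi ` UNIV)" by (rule Psi.subspace_image) simp
  have "complexify ` hom_gens \<subseteq> Psi ` UNIV"
  proof
    fix g assume "g \<in> complexify ` hom_gens"
    then obtain j z where jz: "j \<in> {0..e}" "z \<in> shell R u0 j" "g = complexify (restr shell_union (fz d R u0 j z))"
      by (auto simp: hom_gens_def)
    have "dist u0 z = j" using jz(1,2) e_le_d in_R_iff_dist by (auto simp: shell_def)
    then have "g = Psi (unit_fun z)" using Psi_unit_fun jz by simp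
    then show "g \<in> Psi ` UNIV" by simp
  qed
  then show "fun_space.span (complexify ` hom_gens) \<subseteq> Psi ` UNIV" using fun_space.span_minimal[OF _ sub] by blast
next
  show "Psi ` UNIV \<subseteq> fun_space.span (complexify ` hom_gens)"
  proof
    fix g assume "g \<in> Psi ` UNIV"
    then obtain v where v: "g = Psi v" by auto
    have "g = (\<Sum>a\<in>UNIV. fscale (v a) (Psi (unit_fun a)))"
      unfolding v by (subst fun_eq_sum_unit_fun) (simp only: Psi.sum Psi.scale)
    also have "\<dots> \<in> fun_space.span (complexify ` hom_gens)"
    proof (intro fun_space.span_sum fun_space.span_scale)
      fix a :: 'a
      show "Psi (unit_fun a) \<in> fun_space.span (complexify ` hom_gens)"
      proof (cases "dist u0 a \<le> e")
        case True
        have sh: "a \<in> shell R u0 (dist u0 a)" using in_R_dist[of u0 a] by (simp add: shell_def)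
        have "restr shell_union (fz d R u0 (dist u0 a) a) \<in> hom_gens"
          unfolding hom_gens_def by (rule UN_I[where a="dist u0 a"]) (use True sh in auto)
        then show ?thesis using Psi_unit_fun[OF True] by (auto intro: fun_space.span_base)
      next
        case False
        then show ?thesis using Psi_unit_fun_far by (simp add: fun_space.span_zero)
      qed
    qed
    finally show "g \<in> fun_space.span (complexify ` hom_gens)" .
  qed
qed

lemma span_HomS_eq_span_hom_gens: "fun_space.span (\<Union>j\<in>{0..e}. HomS d R u0 j shell_union) = fun_space.span hom_gens"
  unfolding fun_space.span_eq
proof
  show "(\<Union>j\<in>{0..e}. HomS d R u0 j shell_union) \<subseteq> fun_space.span hom_gens"
  proof
    fix f assume "f \<in> (\<Union>j\<in>{0..e}. HomS d R u0 j shell_union)"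
    then obtain j where j: "j \<in> {0..e}" "f \<in> restr shell_union ` fun_space.span (fz d R u0 j ` shell R u0 j)"
      by (auto simp: HomS_def HomX_def)
    then have "f \<in> fun_space.span (restr shell_union ` fz d R u0 j ` shell R u0 j)" by (simp add: restr.span_image)
    moreover have "restr shell_union ` fz d R u0 j ` shell R u0 j \<subseteq> hom_gens" using j(1) by (auto simp: hom_gens_def)
    ultimately show "f \<in> fun_space.span hom_gens" using fun_space.span_mono by blast
  qed
  show "hom_gens \<subseteq> fun_space.span (\<Union>j\<in>{0..e}. HomS d R u0 j shell_union)"
  proof
    fix f assume "f \<in> hom_gens"
    then obtain j z where j: "j \<in> {0..e}" "z \<in> shell R u0 j" "f = restr shell_union (fz d R u0 j z)"
      by (auto simp: hom_gens_def)
    have "fz d R u0 j z \<in> fun_space.span (fz d R u0 j ` shell R u0 j)" using j(2) by (auto intro: fun_space.span_base)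
    then have "f \<in> HomS d R u0 j shell_union" using j(3) by (auto simp: HomS_def HomX_def)
    then have "f \<in> (\<Union>j\<in>{0..e}. HomS d R u0 j shell_union)" using j(1) by blast
    then show "f \<in> fun_space.span (\<Union>j\<in>{0..e}. HomS d R u0 j shell_union)" by (rule fun_space.span_base)
  qed
qed

lemma dim_Eop_UNIV: "j \<le> d \<Longrightarrow> fun_space.dim (Eop j ` UNIV) = kval R u0 j"
proof -
  assume j: "j \<le> d"
  have "Eop j ` UNIV = {f :: 'a \<Rightarrow> complex. \<forall>x. x \<notin> shell R u0 j \<longrightarrow> f x = 0}"
  proof
    show "Eop j ` UNIV \<subseteq> {f. \<forall>x. x \<notin> shell R u0 j \<longrightarrow> f x = 0}"
      using j in_R_iff_dist by (auto simp: Eop_apply shell_def)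
    show "{f. \<forall>x. x \<notin> shell R u0 j \<longrightarrow> f x = 0} \<subseteq> Eop j ` UNIV"
    proof
      fix f :: "'a \<Rightarrow> complex" assume f: "f \<in> {f. \<forall>x. x \<notin> shell R u0 j \<longrightarrow> f x = 0}"
      have "Eop j f = f" using f j in_R_iff_dist by (auto simp: Eop_apply shell_def fun_eq_iff)
      then show "f \<in> Eop j ` UNIV" by (metis rangeI)
    qed
  qed
  then show ?thesis using dim_vanishing_outside by (simp add: kval_def)
qed

end

theorem theorem2p1:
  fixes d :: nat and R :: "nat \<Rightarrow> ('a::finite \<times> 'a) set" and u0 :: 'a
    and e p :: nat and r :: "nat \<Rightarrow> nat"
  assumes scheme: "P_polynomial_scheme d R"
    and p_pos: "1 \<le> p"
    and e_ge: "p - 1 \<le> e" and e_le: "e \<le> r 1"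
    and r_mono: "\<forall>i. 1 \<le> i \<and> i < p \<longrightarrow> r i < r (i + 1)"
    and r_le: "r p \<le> d"
    and modules: "\<forall>W. irreducible_T_module d R u0 W \<and> endpoint d R u0 W \<le> e \<longrightarrow>
        thin_module d R u0 W \<and> r p \<le> endpoint d R u0 W + module_diameter d R u0 W"
    and nonsing: "det (c_matrix R p e r) \<noteq> 0"
  shows "vector_space.dim (fscale :: real \<Rightarrow> _)
           (module.span (fscale :: real \<Rightarrow> _)
              (\<Union>j\<in>{0..e}. HomS d R u0 j (\<Union>i\<in>{1..p}. shell R u0 (r i))))
         = (\<Sum>j\<in>{e + 1 - p..e}. kval R u0 j)"
proof -
  interpret pscheme_shells d R u0 e p r
    by unfold_locales (use scheme p_pos e_ge e_le r_mono r_le in auto)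
  have "T_module d R u0 UNIV"
    by (rule T_moduleI) (auto simp: fun_space.subspace_def)
  then have "fun_space.dim (Psi ` UNIV) = (\<Sum>j\<in>{e + 1 - p..e}. fun_space.dim (Eop j ` UNIV))"
    by (rule dim_Psi_T_module[OF modules nonsing])
  also have "\<dots> = (\<Sum>j\<in>{e + 1 - p..e}. kval R u0 j)"
    using e_le_d by (intro sum.cong refl dim_Eop_UNIV) auto
  finally show ?thesis
    using span_HomS_eq_span_hom_gens dim_span_complexify[of hom_gens] span_complexify_hom_gens
    by (simp add: shell_union_def)
qed

end
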